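(* Let $J$ be a bounded half-line Jacobi matrix with $0<\inf_na_n\le\sup_na_n<\infty$, and let $\mathcal R$ be the set of its right limits. Let $\Xi$ be the set of $x_0\in\mathbb{R}$ such that for every $J^{(r)}\in\mathcal R$ and every nonzero solution $(u_n)_{n\in\mathbb{Z}}$ of $a^{(r)}_nu_{n+1}+b^{(r)}_nu_n+a^{(r)}_{n-1}u_{n-1}=x_0u_n$ one has $\sum_{n=-\infty}^0|u_n|^2=\infty$. Then: (i) for every compact $\tilde K\subset\Xi$, $\sup_{x_0\in\tilde K}p_n(x_0)^2/K_n(x_0,x_0)\to0$ as $n\to\infty$ (the Nevai condition holds uniformly on $\tilde K$); (ii) if $\Xi\supseteq\sigma_{\mathrm{ess}}(J)$, then $\sup_{x_0\in\sigma(J)}p_n(x_0)^2/K_n(x_0,x_0)\to0$ (the Nevai condition holds uniformly on $\sigma(J)$).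
   Context: A half-line Jacobi matrix $J$ with parameters $\{a_n,b_n\}_{n\ge1}$ ($a_n>0$) acts on $\ell^2(\{1,2,\dots\})$ by $J_{nn}=b_n$, $J_{n,n+1}=J_{n+1,n}=a_n$; $\rho$ is its spectral measure for $\delta_1$, $p_n$ ($n\ge0$) its orthonormal polynomials ($p_{-1}=0$, $p_0=1$, $xp_n=a_{n+1}p_{n+1}+b_{n+1}p_n+a_np_{n-1}$), and $K_n(x,y)=\sum_{j=0}^np_j(x)p_j(y)$. A two-sided sequence $\{a^{(r)}_n,b^{(r)}_n\}_{n\in\mathbb{Z}}$ is a right limit of $J$ if there are $m_j\to\infty$ with $a_{m_j+n}\to a^{(r)}_n$ and $b_{m_j+n}\to b^{(r)}_n$ for every $n\in\mathbb{Z}$; $J^{(r)}$ is the corresponding two-sided Jacobi matrix. The Nevai condition at $x_0$ means $K_n(x,x_0)^2\,d\rho(x)/K_n(x_0,x_0)\to\delta_{x_0}$ weakly. *)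

theory Defs
  imports "HOL-Analysis.Analysis"
begin

text \<open>Jacobi parameters are sequences a, b :: nat => real, used at indices n >= 1
  (the values at index 0 are irrelevant).  Vectors in l^2({1,2,...}) are represented
  as functions u :: nat => real with u 0 = 0.\<close>

definition l2_half :: "(nat \<Rightarrow> real) set" where
  "l2_half = {u. u 0 = 0 \<and> summable (\<lambda>n. (u n)\<^sup>2)}"

definition jacobi_op :: "(nat \<Rightarrow> real) \<Rightarrow> (nat \<Rightarrow> real) \<Rightarrow> (nat \<Rightarrow> real) \<Rightarrow> (nat \<Rightarrow> real)" where
  "jacobi_op a b u = (\<lambda>n. if n = 0 then 0
      else a (n - 1) * u (n - 1) + b n * u n + a n * u (n + 1))"

definition jacobi_spectrum :: "(nat \<Rightarrow> real) \<Rightarrow> (nat \<Rightarrow> real) \<Rightarrow> real set" where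
  "jacobi_spectrum a b =
     {x. \<not> bij_betw (\<lambda>u. (\<lambda>n. jacobi_op a b u n - x * u n)) l2_half l2_half}"

definition jacobi_eigenspace :: "(nat \<Rightarrow> real) \<Rightarrow> (nat \<Rightarrow> real) \<Rightarrow> real \<Rightarrow> (nat \<Rightarrow> real) set" where
  "jacobi_eigenspace a b x = {u \<in> l2_half. jacobi_op a b u = (\<lambda>n. x * u n)}"

definition jacobi_disc_spectrum :: "(nat \<Rightarrow> real) \<Rightarrow> (nat \<Rightarrow> real) \<Rightarrow> real set" where
  "jacobi_disc_spectrum a b =
     {x \<in> jacobi_spectrum a b.
        (\<exists>e>0. ball x e \<inter> jacobi_spectrum a b = {x}) \<and>
        jacobi_eigenspace a b x \<noteq> {\<lambda>n. 0} \<and>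
        (\<exists>vs :: (nat \<Rightarrow> real) list. \<forall>u \<in> jacobi_eigenspace a b x.
            \<exists>c :: nat \<Rightarrow> real. u = (\<lambda>n. \<Sum>i<length vs. c i * (vs ! i) n))}"

definition jacobi_ess_spectrum :: "(nat \<Rightarrow> real) \<Rightarrow> (nat \<Rightarrow> real) \<Rightarrow> real set" where
  "jacobi_ess_spectrum a b = jacobi_spectrum a b - jacobi_disc_spectrum a b"

text \<open>Orthonormal polynomials: p_0 = 1, p_{-1} = 0,
  x p_n = a_{n+1} p_{n+1} + b_{n+1} p_n + a_n p_{n-1}.\<close>
fun opoly :: "(nat \<Rightarrow> real) \<Rightarrow> (nat \<Rightarrow> real) \<Rightarrow> nat \<Rightarrow> real \<Rightarrow> real" where
  "opoly a b 0 x = 1"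
| "opoly a b (Suc 0) x = (x - b 1) / a 1"
| "opoly a b (Suc (Suc n)) x =
     ((x - b (n + 2)) * opoly a b (Suc n) x - a (n + 1) * opoly a b n x) / a (n + 2)"

definition CD_kernel :: "(nat \<Rightarrow> real) \<Rightarrow> (nat \<Rightarrow> real) \<Rightarrow> nat \<Rightarrow> real \<Rightarrow> real \<Rightarrow> real" where
  "CD_kernel a b n x y = (\<Sum>j\<le>n. opoly a b j x * opoly a b j y)"

definition is_right_limit ::
  "(nat \<Rightarrow> real) \<Rightarrow> (nat \<Rightarrow> real) \<Rightarrow> (int \<Rightarrow> real) \<Rightarrow> (int \<Rightarrow> real) \<Rightarrow> bool" where
  "is_right_limit a b ar br \<longleftrightarrow>
     (\<exists>m :: nat \<Rightarrow> nat. filterlim m at_top sequentially \<and>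
        (\<forall>n :: int. ((\<lambda>j. a (nat (int (m j) + n))) \<longlongrightarrow> ar n) sequentially \<and>
                    ((\<lambda>j. b (nat (int (m j) + n))) \<longlongrightarrow> br n) sequentially))"

definition Xi_set :: "(nat \<Rightarrow> real) \<Rightarrow> (nat \<Rightarrow> real) \<Rightarrow> real set" where
  "Xi_set a b = {x0. \<forall>ar br. is_right_limit a b ar br \<longrightarrow>
      (\<forall>u :: int \<Rightarrow> complex.
         (\<forall>n. of_real (ar n) * u (n + 1) + of_real (br n) * u n + of_real (ar (n - 1)) * u (n - 1)
                = of_real x0 * u n) \<and> u \<noteq> (\<lambda>n. 0)
         \<longrightarrow> \<not> summable (\<lambda>k :: nat. (cmod (u (- int k)))\<^sup>2))}"

end

theory Submission
  imports Defs
begin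

text \<open>
  If p_(n_j)(x_j)^2 / K_(n_j)(x_j, x_j)
  stayed above \<epsilon> > 0 with x_j \<rightarrow> x0 and n_j \<rightarrow> \<infinity>, the polynomial solutions normalized at the
  sites n_j would have mass at most 1/\<epsilon> to the left; along a subsequence the parameters
  converge to a right limit and these solutions to a nonzero solution of its eigenvalue
  equation at x0 that is square-summable at -\<infinity>, so x0 is not in Xi
  (concentration_excludes_Xi).  Part (i) then follows by compactness of the given set.
  Part (ii) also needs the spectrum to be compact; closedness rests on the fact that a
  bijective J - x is bounded below (bij_imp_bounded_below, proved by gluing approximate
  eigenvectors with disjoint supports) and on a Neumann-series perturbation lemma.  A limit
  point of a bad sequence in the spectrum lies outside Xi, hence is an isolated eigenvalue,
  where the ratio tends to 0.  The sections below develop, in this order: square-summable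
  sequences, perturbations of bijections, the Jacobi operator, the lower bound, the spectrum,
  right limits, and the uniform Nevai condition.
\<close>

subsection \<open>Square-summable sequences\<close>

text \<open>The squared norm and the norm of a real sequence, set to 0 when the sequence is not
  square-summable; the half-line space l2_half consists of the square-summable u with u 0 = 0.\<close>

definition sq_summable :: "(nat \<Rightarrow> real) \<Rightarrow> bool" where
  "sq_summable u \<longleftrightarrow> summable (\<lambda>n. (u n)\<^sup>2)"

definition sqnorm :: "(nat \<Rightarrow> real) \<Rightarrow> real" where
  "sqnorm u = (if sq_summable u then (\<Sum>n. (u n)\<^sup>2) else 0)"

definition l2norm :: "(nat \<Rightarrow> real) \<Rightarrow> real" where
  "l2norm u = sqrt (sqnorm u)"

lemma l2_half_iff: "u \<in> l2_half \<longleftrightarrow> u 0 = 0 \<and> sq_summable u"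
  by (simp add: l2_half_def sq_summable_def)

lemma sqnorm_nonneg: "0 \<le> sqnorm u"
  by (simp add: sqnorm_def sq_summable_def suminf_nonneg)

lemma l2norm_nonneg: "0 \<le> l2norm u"
  by (simp add: l2norm_def sqnorm_nonneg)

lemma l2norm_squared: "(l2norm u)\<^sup>2 = sqnorm u"
  by (simp add: l2norm_def sqnorm_nonneg)

lemma partial_sqsum_le_sqnorm:
  assumes "finite F" "sq_summable u"
  shows "(\<Sum>n\<in>F. (u n)\<^sup>2) \<le> sqnorm u"
  using assms by (simp add: sqnorm_def sq_summable_def sum_le_suminf)

lemma sq_summable_if_partial_bounded:
  assumes "\<And>N. (\<Sum>n<N. (u n)\<^sup>2) \<le> S"
  shows "sq_summable u" "sqnorm u \<le> S"
proof -
  show su: "sq_summable u" unfolding sq_summable_def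
    by (rule summableI_nonneg_bounded[where x = S]) (use assms in auto)
  show "sqnorm u \<le> S"
    using su assms by (auto simp: sqnorm_def sq_summable_def intro: suminf_le_const)
qed

lemma l2norm_le_if_partial_bounded:
  assumes "\<And>N. (\<Sum>n<N. (u n)\<^sup>2) \<le> R\<^sup>2" "0 \<le> R"
  shows "l2norm u \<le> R"
  using sq_summable_if_partial_bounded(2)[OF assms(1)] assms(2)
  unfolding l2norm_def by (metis real_sqrt_abs real_sqrt_le_mono abs_of_nonneg)

lemma abs_le_l2norm:
  assumes "sq_summable u"
  shows "\<bar>u n\<bar> \<le> l2norm u"
proof -
  have "(u n)\<^sup>2 \<le> sqnorm u" using partial_sqsum_le_sqnorm[of "{n}" u] assms by simp
  then show ?thesis unfolding l2norm_def by (metis real_sqrt_abs real_sqrt_le_mono)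
qed

text \<open>Triangle inequality, obtained from the finite-dimensional one for the partial sums.\<close>
lemma l2norm_add:
  assumes "sq_summable u" "sq_summable v"
  shows "sq_summable (\<lambda>n. u n + v n)" "l2norm (\<lambda>n. u n + v n) \<le> l2norm u + l2norm v"
proof -
  have partial: "(\<Sum>n<N. (u n + v n)\<^sup>2) \<le> (l2norm u + l2norm v)\<^sup>2" for N
  proof -
    have "L2_set (\<lambda>n. u n + v n) {..<N} \<le> L2_set u {..<N} + L2_set v {..<N}"
      by (rule L2_set_triangle_ineq)
    also have "\<dots> \<le> l2norm u + l2norm v"
      using partial_sqsum_le_sqnorm[of "{..<N}"] assms
      by (intro add_mono) (auto simp: L2_set_def l2norm_def power2_eq_square)
    finally have "L2_set (\<lambda>n. u n + v n) {..<N} \<le> l2norm u + l2norm v" .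
    then have "(L2_set (\<lambda>n. u n + v n) {..<N})\<^sup>2 \<le> (l2norm u + l2norm v)\<^sup>2"
      by (rule power_mono) (rule L2_set_nonneg)
    then show ?thesis by (simp add: L2_set_def sum_nonneg)
  qed
  show "sq_summable (\<lambda>n. u n + v n)" by (rule sq_summable_if_partial_bounded(1)[OF partial])
  show "l2norm (\<lambda>n. u n + v n) \<le> l2norm u + l2norm v"
    by (rule l2norm_le_if_partial_bounded[OF partial]) (simp add: l2norm_nonneg)
qed

lemma l2norm_scale: "l2norm (\<lambda>n. k * u n) = \<bar>k\<bar> * l2norm u"
proof -
  have "sqnorm (\<lambda>n. k * u n) = k\<^sup>2 * sqnorm u"
  proof (cases "k = 0")
    case False
    then have "sq_summable (\<lambda>n. k * u n) \<longleftrightarrow> sq_summable u"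
      unfolding sq_summable_def power_mult_distrib by simp
    then show ?thesis unfolding sqnorm_def
      by (auto simp: power_mult_distrib sq_summable_def suminf_mult)
  qed (simp add: sqnorm_def sq_summable_def)
  then show ?thesis by (simp add: l2norm_def real_sqrt_mult)
qed

lemma sq_summable_scale: "sq_summable u \<Longrightarrow> sq_summable (\<lambda>n. k * u n)"
  unfolding sq_summable_def by (simp add: power_mult_distrib summable_mult)

lemma l2norm_minus: "l2norm (\<lambda>n. - u n) = l2norm u"
  by (simp add: sq_summable_def sqnorm_def l2norm_def)

lemma l2norm_diff:
  assumes "sq_summable u" "sq_summable v"
  shows "sq_summable (\<lambda>n. u n - v n)" "l2norm (\<lambda>n. u n - v n) \<le> l2norm u + l2norm v"
  using l2norm_add[OF assms(1) sq_summable_scale[OF assms(2), of "-1"]] l2norm_minus[of v]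
  by simp_all

lemma l2norm_eq_0_iff: "sq_summable u \<Longrightarrow> l2norm u = 0 \<longleftrightarrow> u = (\<lambda>n. 0)"
proof
  show "sq_summable u \<Longrightarrow> l2norm u = 0 \<Longrightarrow> u = (\<lambda>n. 0)"
    using abs_le_l2norm[of u] by fastforce
qed (simp add: l2norm_def sqnorm_def)

lemma l2norm_sum:
  assumes "finite S" "\<And>i. i \<in> S \<Longrightarrow> sq_summable (d i)"
  shows "sq_summable (\<lambda>n. \<Sum>i\<in>S. d i n) \<and> l2norm (\<lambda>n. \<Sum>i\<in>S. d i n) \<le> (\<Sum>i\<in>S. l2norm (d i))"
  using assms
proof (induction S rule: finite_induct)
  case empty then show ?case by (simp add: sq_summable_def l2norm_def sqnorm_def)
next
  case (insert i F)
  then show ?case using l2norm_add[of "d i" "\<lambda>n. \<Sum>i\<in>F. d i n"] by auto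
qed

lemma l2_half_zero: "(\<lambda>n. 0) \<in> l2_half"
  by (simp add: l2_half_iff sq_summable_def)

lemma l2_half_add: "u \<in> l2_half \<Longrightarrow> v \<in> l2_half \<Longrightarrow> (\<lambda>n. u n + v n) \<in> l2_half"
  using l2norm_add(1) by (auto simp: l2_half_iff)

lemma l2_half_diff: "u \<in> l2_half \<Longrightarrow> v \<in> l2_half \<Longrightarrow> (\<lambda>n. u n - v n) \<in> l2_half"
  using l2norm_diff(1) by (auto simp: l2_half_iff)

lemma l2_half_scale: "u \<in> l2_half \<Longrightarrow> (\<lambda>n. k * u n) \<in> l2_half"
  using sq_summable_scale by (auto simp: l2_half_iff)

lemma sq_summable_pointwise_limit:
  assumes lim: "\<And>n. (\<lambda>k. w k n) \<longlonglongrightarrow> W n"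
    and bound: "\<And>k N. (\<Sum>n<N. (w k n)\<^sup>2) \<le> S"
  shows "sq_summable W" "sqnorm W \<le> S"
proof -
  have "(\<Sum>n<N. (W n)\<^sup>2) \<le> S" for N
    by (rule LIMSEQ_le_const2[OF tendsto_sum[OF tendsto_power[OF lim]]]) (use bound in auto)
  then show "sq_summable W" "sqnorm W \<le> S" by (rule sq_summable_if_partial_bounded)+
qed

text \<open>A family of real sequences indexed by a countable type and bounded coordinatewise has a
  subsequence converging in every coordinate (Tychonoff / diagonal argument).\<close>
lemma bounded_family_convergent_subseq:
  fixes F :: "nat \<Rightarrow> 'a::countable \<Rightarrow> real"
  assumes "\<And>j k. \<bar>F j k\<bar> \<le> R k"
  obtains r where "strict_mono r" "\<And>k. (\<lambda>j. F (r j) k) \<longlonglongrightarrow> lim (\<lambda>j. F (r j) k)"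
proof -
  let ?S = "PiE UNIV (\<lambda>k. cball (0::real) (R k))"
  have "compactin (product_topology (\<lambda>_. euclidean) UNIV) ?S"
    by (subst compactin_PiE) auto
  then have "seq_compact ?S"
    by (simp add: euclidean_product_topology compact_imp_seq_compact)
  moreover have "F j \<in> ?S" for j using assms by (auto simp: dist_real_def)
  ultimately obtain l r where r: "strict_mono r" "(F \<circ> r) \<longlonglongrightarrow> l"
    unfolding seq_compact_def by metis
  have "(\<lambda>j. F (r j) k) \<longlonglongrightarrow> l k" for k
    using continuous_on_tendsto_compose[OF continuous_on_product_coordinates[of k] r(2)]
    by (auto simp: o_def)
  then show ?thesis using that r(1) by (metis limI)
qed

lemma geometric_increments_limit:
  assumes w: "\<And>k. w k \<in> l2_half"
    and incr: "\<And>k. l2norm (\<lambda>n. w (Suc k) n - w k n) \<le> r ^ k * D"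
    and r: "0 \<le> r" "r < 1"
  obtains W where "W \<in> l2_half" "\<And>n. (\<lambda>k. w k n) \<longlonglongrightarrow> W n"
proof -
  define d where "d i = (\<lambda>n. w (Suc i) n - w i n)" for i
  have d: "sq_summable (d i)" for i
    unfolding d_def using w l2norm_diff(1) by (auto simp: l2_half_iff)
  have w_sum: "w k = (\<lambda>n. w 0 n + (\<Sum>i<k. d i n))" for k
    by (induction k) (auto simp: d_def)
  have geom: "summable (\<lambda>i. r ^ i * D)" using r by (intro summable_mult2 summable_geometric) auto
  have "norm (d i n) \<le> r ^ i * D" for i n
    using abs_le_l2norm[OF d, of i n] incr[of i] by (simp add: d_def)
  then have "summable (\<lambda>i. d i n)" for n by (rule summable_comparison_test'[OF geom])
  then have lim: "(\<lambda>k. w k n) \<longlonglongrightarrow> w 0 n + (\<Sum>i. d i n)" for n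
    by (subst w_sum) (intro tendsto_add tendsto_const summable_LIMSEQ)
  define R where "R = l2norm (w 0) + (\<Sum>i. r ^ i * D)"
  have "l2norm (w k) \<le> R" for k
  proof -
    have "l2norm (\<lambda>n. \<Sum>i<k. d i n) \<le> (\<Sum>i<k. l2norm (d i))"
      using l2norm_sum[of "{..<k}" d] d by simp
    also have "\<dots> \<le> (\<Sum>i<k. r ^ i * D)" by (rule sum_mono) (use incr in \<open>simp add: d_def\<close>)
    also have "\<dots> \<le> (\<Sum>i. r ^ i * D)"
      using geom r incr[of 0] l2norm_nonneg[of "d 0"]
      by (intro sum_le_suminf) (auto simp: d_def intro!: mult_nonneg_nonneg)
    finally have "l2norm (\<lambda>n. \<Sum>i<k. d i n) \<le> (\<Sum>i. r ^ i * D)" .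
    moreover have "l2norm (w k) \<le> l2norm (w 0) + l2norm (\<lambda>n. \<Sum>i<k. d i n)"
      using w_sum[of k] l2norm_add(2)[of "w 0" "\<lambda>n. \<Sum>i<k. d i n"] l2norm_sum[of "{..<k}" d] d w
      by (auto simp: l2_half_iff)
    ultimately show ?thesis unfolding R_def by linarith
  qed
  then have "(\<Sum>n<N. (w k n)\<^sup>2) \<le> R\<^sup>2" for k N
    using partial_sqsum_le_sqnorm[of "{..<N}" "w k"] w[of k] l2norm_squared[of "w k"]
      power_mono[of "l2norm (w k)" R 2] l2norm_nonneg[of "w k"]
    by (auto simp: l2_half_iff)
  then have "sq_summable (\<lambda>n. w 0 n + (\<Sum>i. d i n))"
    by (rule sq_summable_pointwise_limit(1)[OF lim])
  moreover have "w 0 0 + (\<Sum>i. d i 0) = 0"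
    using w by (simp add: d_def l2_half_iff)
  ultimately show ?thesis using that lim by (simp add: l2_half_iff)
qed

subsection \<open>Small perturbations of invertible operators\<close>

text \<open>Jacobi matrices (being
  banded) and multiplication by scalars have this property; it replaces the continuity of
  bounded operators in the perturbation argument below.\<close>
definition coordwise_continuous :: "((nat \<Rightarrow> real) \<Rightarrow> (nat \<Rightarrow> real)) \<Rightarrow> bool" where
  "coordwise_continuous A \<longleftrightarrow>
     (\<forall>w W n. (\<forall>n. (\<lambda>k. w k n) \<longlonglongrightarrow> W n) \<longrightarrow> (\<lambda>k. A (w k) n) \<longlonglongrightarrow> A W n)"

lemma coordwise_continuousD:
  assumes "coordwise_continuous A" "\<And>n. (\<lambda>k. w k n) \<longlonglongrightarrow> W n"
  shows "(\<lambda>k. A (w k) n) \<longlonglongrightarrow> A W n"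
  using assms(2) assms(1)[unfolded coordwise_continuous_def, rule_format, of w W n] by blast

lemma coordwise_continuous_scale: "coordwise_continuous (\<lambda>u n. k * u n)"
  unfolding coordwise_continuous_def by (intro allI impI tendsto_intros) auto

text \<open>Injectivity comes from the norm estimates,
  surjectivity from the Neumann iteration w_(k+1) = A^(-1) (f - P w_k).\<close>
locale l2_perturbation =
  fixes A P :: "(nat \<Rightarrow> real) \<Rightarrow> (nat \<Rightarrow> real)" and c q :: real
  assumes A_bij: "bij_betw A l2_half l2_half"
    and P_maps: "\<And>u. u \<in> l2_half \<Longrightarrow> P u \<in> l2_half"
    and A_diff: "\<And>u v. A (\<lambda>n. u n - v n) = (\<lambda>n. A u n - A v n)"
    and P_diff: "\<And>u v. P (\<lambda>n. u n - v n) = (\<lambda>n. P u n - P v n)"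
    and A_below: "\<And>u. u \<in> l2_half \<Longrightarrow> c * l2norm u \<le> l2norm (A u)"
    and P_above: "\<And>u. u \<in> l2_half \<Longrightarrow> l2norm (P u) \<le> q * l2norm u"
    and q_nonneg: "0 \<le> q" and q_less: "q < c"
    and A_coordwise: "coordwise_continuous A"
    and P_coordwise: "coordwise_continuous P"
begin

lemma norm_contraction:
  assumes "u \<in> l2_half" "v \<in> l2_half" "A u = (\<lambda>n. - P v n)"
  shows "l2norm u \<le> (q / c) * l2norm v"
proof -
  have "c * l2norm u \<le> q * l2norm v"
    using A_below[OF assms(1)] P_above[OF assms(2)] assms(3) l2norm_minus[of "P v"] by simp
  then show ?thesis using q_nonneg q_less by (simp add: field_simps)
qed

lemma sum_inj: "inj_on (\<lambda>u n. A u n + P u n) l2_half"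
proof (rule inj_onI)
  fix u v assume uv: "u \<in> l2_half" "v \<in> l2_half" "(\<lambda>n. A u n + P u n) = (\<lambda>n. A v n + P v n)"
  define d where "d = (\<lambda>n. u n - v n)"
  have d: "d \<in> l2_half" unfolding d_def using uv l2_half_diff by blast
  have "A u n + P u n = A v n + P v n" for n using fun_cong[OF uv(3)] by simp
  then have "A d = (\<lambda>n. - P d n)"
    unfolding d_def A_diff P_diff by (intro ext) (simp add: algebra_simps)
  then have "l2norm d \<le> (q / c) * l2norm d" using norm_contraction d by blast
  then have "(1 - q / c) * l2norm d \<le> 0" by (simp add: algebra_simps)
  moreover have "q / c < 1" using q_nonneg q_less by simp
  ultimately have "l2norm d = 0" using l2norm_nonneg[of d] by (simp add: mult_le_0_iff)
  then show "u = v" using d l2norm_eq_0_iff by (auto simp: l2_half_iff d_def fun_eq_iff)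
qed

definition A_inv :: "(nat \<Rightarrow> real) \<Rightarrow> (nat \<Rightarrow> real)" where
  "A_inv = the_inv_into l2_half A"

lemma A_inv: "g \<in> l2_half \<Longrightarrow> A_inv g \<in> l2_half \<and> A (A_inv g) = g"
  unfolding A_inv_def using A_bij
  by (metis bij_betw_def bij_betw_the_inv_into f_the_inv_into_f bij_betwE)

primrec neumann_iter :: "(nat \<Rightarrow> real) \<Rightarrow> nat \<Rightarrow> (nat \<Rightarrow> real)" where
  "neumann_iter f 0 = (\<lambda>n. 0)"
| "neumann_iter f (Suc k) = A_inv (\<lambda>n. f n - P (neumann_iter f k) n)"

lemma neumann_iter:
  assumes "f \<in> l2_half"
  shows "neumann_iter f k \<in> l2_half" "A (neumann_iter f (Suc k)) = (\<lambda>n. f n - P (neumann_iter f k) n)"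
proof -
  show l2: "neumann_iter f k \<in> l2_half" for k
  proof (induction k)
    case (Suc k)
    then show ?case using A_inv[OF l2_half_diff[OF assms P_maps[OF Suc.IH]]] by simp
  qed (simp add: l2_half_zero)
  show "A (neumann_iter f (Suc k)) = (\<lambda>n. f n - P (neumann_iter f k) n)"
    using A_inv[OF l2_half_diff[OF assms P_maps[OF l2]]] by simp
qed

lemma neumann_increments:
  assumes "f \<in> l2_half"
  shows "l2norm (\<lambda>n. neumann_iter f (Suc k) n - neumann_iter f k n)
           \<le> (q / c) ^ k * l2norm (neumann_iter f 1)"
proof (induction k)
  case (Suc k)
  let ?d = "\<lambda>k n. neumann_iter f (Suc k) n - neumann_iter f k n"
  have "A (?d (Suc k)) = (\<lambda>n. - P (?d k) n)"
    unfolding A_diff P_diff neumann_iter(2)[OF assms] by (simp add: fun_eq_iff del: neumann_iter.simps)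
  then have "l2norm (?d (Suc k)) \<le> (q / c) * l2norm (?d k)"
    by (intro norm_contraction l2_half_diff neumann_iter(1)[OF assms])
  also have "\<dots> \<le> (q / c) * ((q / c) ^ k * l2norm (neumann_iter f 1))"
    using Suc q_nonneg q_less by (intro mult_left_mono) auto
  finally show ?case by (simp del: neumann_iter.simps)
qed (simp del: neumann_iter.simps(2))

lemma sum_surj:
  assumes f: "f \<in> l2_half"
  shows "\<exists>W\<in>l2_half. (\<lambda>n. A W n + P W n) = f"
proof -
  have r: "0 \<le> q / c" "q / c < 1" using q_nonneg q_less by auto
  obtain W where W: "W \<in> l2_half" "\<And>n. (\<lambda>k. neumann_iter f k n) \<longlonglongrightarrow> W n"
    using geometric_increments_limit[OF neumann_iter(1)[OF f] neumann_increments[OF f] r] by blast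
  have "A W n + P W n = f n" for n
  proof -
    have "(\<lambda>k. A (neumann_iter f (Suc k)) n + P (neumann_iter f k) n) \<longlonglongrightarrow> A W n + P W n"
      by (intro tendsto_add coordwise_continuousD[OF A_coordwise] coordwise_continuousD[OF P_coordwise]
          LIMSEQ_Suc W(2))
    then have "(\<lambda>k. f n) \<longlonglongrightarrow> A W n + P W n"
      by (simp add: neumann_iter(2)[OF f] del: neumann_iter.simps)
    then show ?thesis by (simp add: LIMSEQ_const_iff)
  qed
  then show ?thesis using W(1) by blast
qed

theorem sum_bij: "bij_betw (\<lambda>u n. A u n + P u n) l2_half l2_half"
proof -
  have "(\<lambda>n. A u n + P u n) \<in> l2_half" if "u \<in> l2_half" for u
    using l2_half_add[OF bij_betw_apply[OF A_bij that] P_maps[OF that]] .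
  then have "(\<lambda>u n. A u n + P u n) ` l2_half \<subseteq> l2_half" by blast
  then show ?thesis using sum_inj sum_surj unfolding bij_betw_def by blast
qed

end

subsection \<open>The Jacobi operator and its polynomial solution\<close>

definition shifted_jacobi :: "(nat \<Rightarrow> real) \<Rightarrow> (nat \<Rightarrow> real) \<Rightarrow> real \<Rightarrow> (nat \<Rightarrow> real) \<Rightarrow> (nat \<Rightarrow> real)" where
  "shifted_jacobi a b x u = (\<lambda>n. jacobi_op a b u n - x * u n)"

text \<open>The formal solution (0, p_0(x), p_1(x), ...) of J u = x u; it is the only solution up to
  scaling, and x is an eigenvalue of J exactly when it is square-summable.\<close>
definition poly_vec :: "(nat \<Rightarrow> real) \<Rightarrow> (nat \<Rightarrow> real) \<Rightarrow> real \<Rightarrow> nat \<Rightarrow> real" where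
  "poly_vec a b x n = (if n = 0 then 0 else opoly a b (n - 1) x)"

lemma jacobi_spectrum_iff:
  "x \<in> jacobi_spectrum a b \<longleftrightarrow> \<not> bij_betw (shifted_jacobi a b x) l2_half l2_half"
  by (simp add: jacobi_spectrum_def shifted_jacobi_def[abs_def])

lemma jacobi_op_diff: "jacobi_op a b (\<lambda>n. u n - v n) = (\<lambda>n. jacobi_op a b u n - jacobi_op a b v n)"
  by (auto simp: jacobi_op_def algebra_simps)

lemma shifted_jacobi_diff:
  "shifted_jacobi a b x (\<lambda>n. u n - v n) = (\<lambda>n. shifted_jacobi a b x u n - shifted_jacobi a b x v n)"
  by (auto simp: shifted_jacobi_def jacobi_op_def algebra_simps)

lemma shifted_jacobi_scale:
  "shifted_jacobi a b x (\<lambda>n. k * u n) = (\<lambda>n. k * shifted_jacobi a b x u n)"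
  by (auto simp: shifted_jacobi_def jacobi_op_def algebra_simps)

lemma shifted_jacobi_sum:
  assumes "finite S"
  shows "shifted_jacobi a b x (\<lambda>n. \<Sum>k\<in>S. w k n) = (\<lambda>n. \<Sum>k\<in>S. shifted_jacobi a b x (w k) n)"
proof -
  have "jacobi_op a b (\<lambda>n. \<Sum>k\<in>S. w k n) = (\<lambda>n. \<Sum>k\<in>S. jacobi_op a b (w k) n)"
    using assms by (induction S rule: finite_induct)
      (auto simp: jacobi_op_def algebra_simps sum.distrib sum_distrib_left)
  then show ?thesis by (simp add: shifted_jacobi_def sum_subtractf sum_distrib_left)
qed

lemma shifted_jacobi_local:
  assumes "\<And>m. m \<le> n + 1 \<Longrightarrow> u m = v m"
  shows "shifted_jacobi a b x u n = shifted_jacobi a b x v n"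
  using assms by (auto simp: shifted_jacobi_def jacobi_op_def)

lemma coordwise_continuous_jacobi: "coordwise_continuous (jacobi_op a b)"
  unfolding coordwise_continuous_def jacobi_op_def by (auto intro!: tendsto_add tendsto_mult_left)

lemma coordwise_continuous_shifted_jacobi: "coordwise_continuous (shifted_jacobi a b x)"
  unfolding coordwise_continuous_def shifted_jacobi_def jacobi_op_def
  by (auto intro!: tendsto_add tendsto_diff tendsto_minus tendsto_mult_left)

lemma sq_sum3_le: "((x::real) + y + z)\<^sup>2 \<le> 3 * (x\<^sup>2 + y\<^sup>2 + z\<^sup>2)"
proof -
  have "0 \<le> (x - y)\<^sup>2 + (y - z)\<^sup>2 + (x - z)\<^sup>2" by simp
  then show ?thesis by (simp add: power2_eq_square algebra_simps)
qed

locale bounded_jacobi =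
  fixes a b :: "nat \<Rightarrow> real" and c C B :: real
  assumes c_pos: "0 < c" and a_lower: "\<And>n. 1 \<le> n \<Longrightarrow> c \<le> a n"
    and a_upper: "\<And>n. 1 \<le> n \<Longrightarrow> a n \<le> C" and b_bound: "\<And>n. 1 \<le> n \<Longrightarrow> \<bar>b n\<bar> \<le> B"
begin

lemma a_pos: "1 \<le> n \<Longrightarrow> 0 < a n"
  using a_lower c_pos by force

lemma C_pos: "0 < C"
  using a_lower[of 1] a_upper[of 1] c_pos by simp

lemma B_nonneg: "0 \<le> B"
  using b_bound[of 1] by simp

lemma abs_a_le: "1 \<le> n \<Longrightarrow> \<bar>a n\<bar> \<le> C"
  using a_pos a_upper by force

lemma opoly_recurrence:
  "x * opoly a b M x = a (M + 1) * opoly a b (M + 1) x + b (M + 1) * opoly a b M x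
     + (if M = 0 then 0 else a M * opoly a b (M - 1) x)"
proof (cases M)
  case 0 then show ?thesis using a_pos[of 1] by simp
next
  case (Suc n)
  then show ?thesis using a_pos[of "n + 2"] by (simp add: field_simps)
qed

lemma poly_vec_eigen: "jacobi_op a b (poly_vec a b x) = (\<lambda>n. x * poly_vec a b x n)"
proof
  fix n
  show "jacobi_op a b (poly_vec a b x) n = x * poly_vec a b x n"
    using opoly_recurrence[of x "n - 1"]
    by (cases n) (auto simp: jacobi_op_def poly_vec_def algebra_simps)
qed

lemma poly_vec_1: "poly_vec a b x 1 = 1"
  by (simp add: poly_vec_def)

lemma eigen_solution_unique:
  assumes "u 0 = 0" "\<And>n. 1 \<le> n \<Longrightarrow> jacobi_op a b u n = x * u n"
  shows "u = (\<lambda>n. u 1 * poly_vec a b x n)"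
proof -
  let ?P = "poly_vec a b x"
  have both: "u n = u 1 * ?P n \<and> u (n + 1) = u 1 * ?P (n + 1)" for n
  proof (induction n)
    case 0 then show ?case using assms(1) by (simp add: poly_vec_def)
  next
    case (Suc n)
    have "a (n + 1) * u (n + 2) = x * u (n + 1) - a n * u n - b (n + 1) * u (n + 1)"
      using assms(2)[of "n + 1"] by (simp add: jacobi_op_def)
    also have "\<dots> = u 1 * (x * ?P (n + 1) - a n * ?P n - b (n + 1) * ?P (n + 1))"
      using Suc.IH by (simp add: algebra_simps)
    also have "\<dots> = a (n + 1) * (u 1 * ?P (n + 2))"
    proof -
      have "a n * ?P n + b (n + 1) * ?P (n + 1) + a (n + 1) * ?P (n + 2) = x * ?P (n + 1)"
        using fun_cong[OF poly_vec_eigen[of x], of "n + 1"] by (simp add: jacobi_op_def)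
      from arg_cong[OF this, of "\<lambda>t. u 1 * t"] show ?thesis by (simp add: algebra_simps)
    qed
    finally have "u (n + 2) = u 1 * ?P (n + 2)" using a_pos[of "n + 1"] by simp
    then show ?case using Suc.IH by simp
  qed
  show ?thesis by (rule ext) (rule conjunct1[OF both])
qed

definition op_bound :: real where
  "op_bound = sqrt (3 * (2 * C\<^sup>2 + B\<^sup>2))"

lemma op_bound_nonneg: "0 \<le> op_bound"
  by (simp add: op_bound_def)

lemma jacobi_op_sq_le:
  assumes "u 0 = 0"
  shows "(jacobi_op a b u n)\<^sup>2
           \<le> 3 * (C\<^sup>2 * (if n = 0 then 0 else (u (n - 1))\<^sup>2) + B\<^sup>2 * (u n)\<^sup>2 + C\<^sup>2 * (u (n + 1))\<^sup>2)"
proof (cases "n = 0")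
  case False
  have coeff: "(k * t)\<^sup>2 \<le> (K * t)\<^sup>2" if "\<bar>k\<bar> \<le> K" for k K t :: real
  proof -
    have "k\<^sup>2 \<le> K\<^sup>2" using power_mono[OF that abs_ge_zero, of 2] by simp
    then show ?thesis by (simp add: power_mult_distrib mult_right_mono)
  qed
  have "(a (n - 1) * u (n - 1))\<^sup>2 \<le> (C * u (n - 1))\<^sup>2"
    using assms False abs_a_le[of "n - 1"] coeff[of "a (n - 1)" C] by (cases "n = 1") auto
  moreover have "(b n * u n)\<^sup>2 \<le> (B * u n)\<^sup>2" using b_bound[of n] False coeff by simp
  moreover have "(a n * u (n + 1))\<^sup>2 \<le> (C * u (n + 1))\<^sup>2" using abs_a_le[of n] False coeff by simp
  ultimately show ?thesis
    using False sq_sum3_le[of "a (n - 1) * u (n - 1)" "b n * u n" "a n * u (n + 1)"]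
    by (simp add: jacobi_op_def power_mult_distrib)
qed (simp add: jacobi_op_def)

lemma jacobi_op_bound:
  assumes "u \<in> l2_half"
  shows "sq_summable (jacobi_op a b u)" "l2norm (jacobi_op a b u) \<le> op_bound * l2norm u"
proof -
  have su: "sq_summable u" and u0: "u 0 = 0" using assms by (auto simp: l2_half_iff)
  have left: "(\<Sum>n<N. if n = 0 then 0 else (u (n - 1))\<^sup>2) \<le> sqnorm u" for N
  proof -
    have "(\<Sum>n<N. if n = 0 then 0 else (u (n - 1))\<^sup>2) \<le> (\<Sum>n<Suc N. if n = 0 then 0 else (u (n - 1))\<^sup>2)"
      by simp
    also have "\<dots> = (\<Sum>n<N. (u n)\<^sup>2)" by (subst sum.lessThan_Suc_shift) simp
    also have "\<dots> \<le> sqnorm u" by (rule partial_sqsum_le_sqnorm[OF finite_lessThan su])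
    finally show ?thesis .
  qed
  have right: "(\<Sum>n<N. (u (n + 1))\<^sup>2) \<le> sqnorm u" for N
  proof -
    have "(\<Sum>n<N. (u (n + 1))\<^sup>2) = (\<Sum>n<Suc N. (u n)\<^sup>2)"
      by (subst sum.lessThan_Suc_shift) (simp add: u0)
    also have "\<dots> \<le> sqnorm u" by (rule partial_sqsum_le_sqnorm[OF finite_lessThan su])
    finally show ?thesis .
  qed
  have partial: "(\<Sum>n<N. (jacobi_op a b u n)\<^sup>2) \<le> (op_bound * l2norm u)\<^sup>2" for N
  proof -
    have "(\<Sum>n<N. (jacobi_op a b u n)\<^sup>2)
      \<le> 3 * (C\<^sup>2 * (\<Sum>n<N. if n = 0 then 0 else (u (n - 1))\<^sup>2) + B\<^sup>2 * (\<Sum>n<N. (u n)\<^sup>2)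
             + C\<^sup>2 * (\<Sum>n<N. (u (n + 1))\<^sup>2))"
      by (rule order_trans[OF sum_mono[OF jacobi_op_sq_le[where u = u, OF u0]]])
        (simp add: sum.distrib sum_distrib_left if_distrib[of "\<lambda>t. C\<^sup>2 * t"] cong: if_cong)
    also have "\<dots> \<le> 3 * (C\<^sup>2 * sqnorm u + B\<^sup>2 * sqnorm u + C\<^sup>2 * sqnorm u)"
      using left right partial_sqsum_le_sqnorm[OF finite_lessThan su]
      by (intro mult_left_mono add_mono) auto
    also have "\<dots> = (op_bound * l2norm u)\<^sup>2"
      by (simp add: op_bound_def l2norm_squared algebra_simps)
    finally show ?thesis .
  qed
  show "sq_summable (jacobi_op a b u)" by (rule sq_summable_if_partial_bounded(1)[OF partial])
  show "l2norm (jacobi_op a b u) \<le> op_bound * l2norm u"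
    by (rule l2norm_le_if_partial_bounded[OF partial]) (simp add: op_bound_nonneg l2norm_nonneg)
qed

lemma jacobi_op_l2: "u \<in> l2_half \<Longrightarrow> jacobi_op a b u \<in> l2_half"
  using jacobi_op_bound(1) by (simp add: l2_half_iff jacobi_op_def)

lemma shifted_jacobi_bound:
  assumes "u \<in> l2_half"
  shows "shifted_jacobi a b x u \<in> l2_half"
    "l2norm (shifted_jacobi a b x u) \<le> (op_bound + \<bar>x\<bar>) * l2norm u"
proof -
  have su: "sq_summable u" using assms by (simp add: l2_half_iff)
  have eq: "shifted_jacobi a b x u = (\<lambda>n. jacobi_op a b u n - x * u n)"
    by (simp add: shifted_jacobi_def)
  show "shifted_jacobi a b x u \<in> l2_half"
    unfolding eq using l2_half_diff[OF jacobi_op_l2[OF assms] l2_half_scale[OF assms]] .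
  have "l2norm (shifted_jacobi a b x u) \<le> l2norm (jacobi_op a b u) + \<bar>x\<bar> * l2norm u"
    unfolding eq using l2norm_diff(2)[OF jacobi_op_bound(1)[OF assms] sq_summable_scale[OF su]]
    by (simp add: l2norm_scale)
  then show "l2norm (shifted_jacobi a b x u) \<le> (op_bound + \<bar>x\<bar>) * l2norm u"
    using jacobi_op_bound(2)[OF assms] by (simp add: algebra_simps)
qed

end

subsection \<open>Bijective shifted Jacobi operators are bounded below\<close>

text \<open>There is no bounded-inverse theorem to appeal to, so we prove directly: if J - x is a
  bijection of l2_half then it is bounded below.  Otherwise one finds approximate eigenvectors
  with disjoint supports and rapidly decreasing defects; gluing them along the even and along
  the odd indices yields two sequences that J - x maps into l2_half, and since J - x is onto,
  each differs from a square-summable sequence by a multiple of the polynomial solution.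
  Comparing masses on the individual supports gives a contradiction.\<close>

definition bounded_below :: "((nat \<Rightarrow> real) \<Rightarrow> (nat \<Rightarrow> real)) \<Rightarrow> bool" where
  "bounded_below T \<longleftrightarrow> (\<exists>c>0. \<forall>u\<in>l2_half. c * l2norm u \<le> l2norm (T u))"

lemma truncate_to_window:
  assumes w: "sq_summable w" and low: "(\<Sum>n<L. (w n)\<^sup>2) \<le> \<tau>\<^sup>2" and tau: "0 < \<tau>"
  obtains N where "L \<le> N" "sq_summable (\<lambda>n. if L \<le> n \<and> n < N then 0 else w n)"
    "l2norm (\<lambda>n. if L \<le> n \<and> n < N then 0 else w n) \<le> 2 * \<tau>"
proof -
  have "(\<lambda>N. \<Sum>n<N. (w n)\<^sup>2) \<longlonglongrightarrow> sqnorm w"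
    using w unfolding sqnorm_def sq_summable_def by (simp add: summable_LIMSEQ)
  then have "\<forall>\<^sub>F N in sequentially. sqnorm w - \<tau>\<^sup>2 < (\<Sum>n<N. (w n)\<^sup>2)"
    using tau by (simp add: order_tendsto_iff)
  then obtain N1 where N1: "\<And>N. N1 \<le> N \<Longrightarrow> sqnorm w - \<tau>\<^sup>2 < (\<Sum>n<N. (w n)\<^sup>2)"
    unfolding eventually_sequentially by blast
  define N where "N = max N1 L"
  let ?r = "\<lambda>n. if L \<le> n \<and> n < N then 0 else w n"
  have "(\<Sum>n<M. (?r n)\<^sup>2) \<le> (2 * \<tau>)\<^sup>2" for M
  proof -
    let ?K = "max M N"
    have tail: "(\<Sum>n\<in>{N..<?K}. (w n)\<^sup>2) \<le> \<tau>\<^sup>2"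
    proof -
      have "(\<Sum>n\<in>{N..<?K}. (w n)\<^sup>2) = (\<Sum>n<?K. (w n)\<^sup>2) - (\<Sum>n<N. (w n)\<^sup>2)"
        using sum.atLeastLessThan_concat[of 0 N ?K "\<lambda>n. (w n)\<^sup>2"] by (simp add: atLeast0LessThan)
      then show ?thesis
        using partial_sqsum_le_sqnorm[OF finite_lessThan[of ?K] w] N1[of N] by (simp add: N_def)
    qed
    have "(\<Sum>n<M. (?r n)\<^sup>2) = (\<Sum>n\<in>{..<M} \<inter> ({..<L} \<union> {N..<?K}). (w n)\<^sup>2)"
      by (rule sum.mono_neutral_cong_right) auto
    also have "\<dots> \<le> (\<Sum>n\<in>{..<L} \<union> {N..<?K}. (w n)\<^sup>2)" by (rule sum_mono2) auto
    also have "\<dots> = (\<Sum>n<L. (w n)\<^sup>2) + (\<Sum>n\<in>{N..<?K}. (w n)\<^sup>2)"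
      by (rule sum.union_disjoint) (auto simp: N_def)
    finally have "(\<Sum>n<M. (?r n)\<^sup>2) \<le> (\<Sum>n<L. (w n)\<^sup>2) + (\<Sum>n\<in>{N..<?K}. (w n)\<^sup>2)" .
    moreover have "(2 * \<tau>)\<^sup>2 = 4 * \<tau>\<^sup>2" by (simp add: power_mult_distrib)
    ultimately show ?thesis using low tail zero_le_power2[of \<tau>] by linarith
  qed
  then have "sq_summable ?r" "l2norm ?r \<le> 2 * \<tau>"
    by (rule sq_summable_if_partial_bounded(1), rule l2norm_le_if_partial_bounded) (use tau in simp)
  moreover have "L \<le> N" by (simp add: N_def)
  ultimately show ?thesis using that by blast
qed

context bounded_jacobi
begin

lemma poly_vec_not_l2_if_bij:
  assumes bij: "bij_betw (shifted_jacobi a b x) l2_half l2_half"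
  shows "\<not> sq_summable (poly_vec a b x)"
proof
  assume "sq_summable (poly_vec a b x)"
  then have P: "poly_vec a b x \<in> l2_half" by (simp add: l2_half_iff poly_vec_def)
  have "shifted_jacobi a b x (poly_vec a b x) = shifted_jacobi a b x (\<lambda>n. 0)"
    using poly_vec_eigen[of x] by (auto simp: shifted_jacobi_def jacobi_op_def fun_eq_iff)
  then have "poly_vec a b x = (\<lambda>n. 0)"
    using bij P l2_half_zero unfolding bij_betw_def inj_on_def by blast
  then show False using poly_vec_1[of x] by (metis zero_neq_one)
qed

lemma unit_quasimodes:
  assumes "\<not> bounded_below (shifted_jacobi a b x)"
  obtains v where "\<And>k. v k \<in> l2_half" "\<And>k. l2norm (v k) = 1"
    "\<And>k. l2norm (shifted_jacobi a b x (v k)) \<le> 1 / (real k + 1)"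
proof -
  have "\<exists>v. v \<in> l2_half \<and> l2norm v = 1 \<and> l2norm (shifted_jacobi a b x v) \<le> 1 / (real k + 1)" for k
  proof -
    obtain u where u: "u \<in> l2_half" "l2norm (shifted_jacobi a b x u) < (1 / (real k + 1)) * l2norm u"
    proof -
      have "0 < 1 / (real k + 1)" by simp
      then have "\<not> (\<forall>u\<in>l2_half. 1 / (real k + 1) * l2norm u \<le> l2norm (shifted_jacobi a b x u))"
        using assms unfolding bounded_below_def by blast
      then show ?thesis using that by (auto simp: not_le)
    qed
    have nu: "0 < l2norm u"
      using u(2) l2norm_nonneg[of u] l2norm_nonneg[of "shifted_jacobi a b x u"]
      by (metis less_eq_real_def mult_zero_right not_le)
    define v where "v = (\<lambda>n. (1 / l2norm u) * u n)"
    have "v \<in> l2_half" unfolding v_def by (rule l2_half_scale[OF u(1)])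
    moreover have "l2norm v = 1" unfolding v_def l2norm_scale using nu by simp
    moreover have "l2norm (shifted_jacobi a b x v) = l2norm (shifted_jacobi a b x u) / l2norm u"
      unfolding v_def shifted_jacobi_scale l2norm_scale using nu by simp
    ultimately show ?thesis using u(2) nu by (intro exI[of _ v]) (simp add: divide_le_eq)
  qed
  then show ?thesis using that by metis
qed

text \<open>If J - x is bijective, approximate eigenvectors of norm one tend to 0 coordinatewise along a
  subsequence: a coordinatewise limit solves J V = x V, so it is a multiple of the
  polynomial solution, which is not square-summable.\<close>
lemma unit_quasimodes_vanish:
  assumes bij: "bij_betw (shifted_jacobi a b x) l2_half l2_half"
    and v: "\<And>k. v k \<in> l2_half" "\<And>k. l2norm (v k) = 1"
      "\<And>k. l2norm (shifted_jacobi a b x (v k)) \<le> 1 / (real k + 1)"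
  obtains r where "strict_mono r" "\<And>n. (\<lambda>j. v (r j) n) \<longlonglongrightarrow> 0"
proof -
  have vs: "sq_summable (v k)" for k using v(1) by (simp add: l2_half_iff)
  obtain r where r: "strict_mono r" "\<And>n. (\<lambda>j. v (r j) n) \<longlonglongrightarrow> lim (\<lambda>j. v (r j) n)"
    using bounded_family_convergent_subseq[of v "\<lambda>_. 1"] abs_le_l2norm[OF vs] v(2) by metis
  define V where "V n = lim (\<lambda>j. v (r j) n)" for n
  have Vlim: "(\<lambda>j. v (r j) n) \<longlonglongrightarrow> V n" for n using r(2) by (simp add: V_def)
  have defect_to_0: "(\<lambda>j. shifted_jacobi a b x (v (r j)) n) \<longlonglongrightarrow> 0" for n
  proof (rule Lim_null_comparison[OF always_eventually LIMSEQ_inverse_real_of_nat], intro allI)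
    fix j
    have "\<bar>shifted_jacobi a b x (v (r j)) n\<bar> \<le> l2norm (shifted_jacobi a b x (v (r j)))"
      using abs_le_l2norm shifted_jacobi_bound(1)[OF v(1)] by (simp add: l2_half_iff)
    also have "\<dots> \<le> 1 / (real (r j) + 1)" by (rule v(3))
    also have "\<dots> \<le> inverse (real (Suc j))"
      using seq_suble[OF r(1), of j] by (simp add: inverse_eq_divide frac_le)
    finally show "norm (shifted_jacobi a b x (v (r j)) n) \<le> inverse (real (Suc j))" by simp
  qed
  have "shifted_jacobi a b x V n = 0" for n
    using coordwise_continuousD[OF coordwise_continuous_shifted_jacobi Vlim] defect_to_0
    by (rule LIMSEQ_unique)
  moreover have V0: "V 0 = 0" using Vlim[of 0] v(1) by (simp add: l2_half_iff LIMSEQ_const_iff)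
  ultimately have V: "V = (\<lambda>n. V 1 * poly_vec a b x n)"
    by (intro eigen_solution_unique) (auto simp: shifted_jacobi_def)
  have "(\<Sum>n<N. (v k n)\<^sup>2) \<le> 1" for k N
    using partial_sqsum_le_sqnorm[OF finite_lessThan[of N] vs[of k]] l2norm_squared[of "v k"] v(2)
    by simp
  then have "sq_summable V" by (rule sq_summable_pointwise_limit(1)[OF Vlim])
  have "V 1 = 0"
  proof (rule ccontr)
    assume "V 1 \<noteq> 0"
    then have "poly_vec a b x = (\<lambda>n. (1 / V 1) * V n)" by (subst V) auto
    then show False
      using poly_vec_not_l2_if_bij[OF bij] sq_summable_scale[OF \<open>sq_summable V\<close>] by metis
  qed
  then have "V = (\<lambda>n. 0)" by (subst V) simp
  then show ?thesis using that r(1) Vlim by simp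
qed

end

context bounded_jacobi
begin

lemma quasimode_small_initial_mass:
  assumes bij: "bij_betw (shifted_jacobi a b x) l2_half l2_half"
    and nb: "\<not> bounded_below (shifted_jacobi a b x)" and pos: "0 < \<delta>" "0 < \<epsilon>"
  obtains w where "w \<in> l2_half" "l2norm w = 1" "l2norm (shifted_jacobi a b x w) \<le> \<delta>"
    "(\<Sum>n<L. (w n)\<^sup>2) < \<epsilon>"
proof -
  obtain v where v: "\<And>k. v k \<in> l2_half" "\<And>k. l2norm (v k) = 1"
    "\<And>k. l2norm (shifted_jacobi a b x (v k)) \<le> 1 / (real k + 1)"
    using unit_quasimodes[OF nb] by blast
  obtain r where r: "strict_mono r" "\<And>n. (\<lambda>j. v (r j) n) \<longlonglongrightarrow> 0"
    using unit_quasimodes_vanish[OF bij v] by blast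
  have "(\<lambda>j. \<Sum>n<L. (v (r j) n)\<^sup>2) \<longlonglongrightarrow> (\<Sum>n<L. 0\<^sup>2)" by (intro tendsto_intros r(2))
  then have ev_mass: "\<forall>\<^sub>F j in sequentially. (\<Sum>n<L. (v (r j) n)\<^sup>2) < \<epsilon>"
    using pos(2) by (simp add: order_tendsto_iff)
  obtain M :: nat where M: "1 / \<delta> < M" using reals_Archimedean2 by blast
  have ev_defect: "\<forall>\<^sub>F j in sequentially. 1 / (real (r j) + 1) \<le> \<delta>"
  proof (rule eventually_sequentiallyI[of M])
    fix j assume "M \<le> j"
    then have "1 / \<delta> < real (r j) + 1" using seq_suble[OF r(1), of j] M by linarith
    then show "1 / (real (r j) + 1) \<le> \<delta>" using pos(1) by (simp add: field_simps)
  qed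
  obtain j where j: "(\<Sum>n<L. (v (r j) n)\<^sup>2) < \<epsilon>" "1 / (real (r j) + 1) \<le> \<delta>"
  proof -
    from eventually_conj[OF ev_mass ev_defect] obtain M where
      "\<And>j. M \<le> j \<Longrightarrow> (\<Sum>n<L. (v (r j) n)\<^sup>2) < \<epsilon> \<and> 1 / (real (r j) + 1) \<le> \<delta>"
      unfolding eventually_sequentially by blast
    then show ?thesis using that by blast
  qed
  show ?thesis by (rule that[of "v (r j)"]) (use v(1,2) order_trans[OF v(3) j(2)] j(1) in auto)
qed

lemma localized_quasimode:
  assumes bij: "bij_betw (shifted_jacobi a b x) l2_half l2_half"
    and nb: "\<not> bounded_below (shifted_jacobi a b x)" and pos: "0 < \<delta>"
  obtains u R where "u \<in> l2_half" "\<And>n. u n \<noteq> 0 \<Longrightarrow> L \<le> n \<and> n \<le> R" "1/4 \<le> sqnorm u"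
    "l2norm (shifted_jacobi a b x u) \<le> \<delta>"
proof -
  define K where "K = op_bound + \<bar>x\<bar>"
  have K: "0 \<le> K" using op_bound_nonneg by (simp add: K_def)
  define \<tau> where "\<tau> = min (1/4) (\<delta> / (4 * (K + 1)))"
  have tau: "0 < \<tau>" "\<tau> \<le> 1/4" "K * (2 * \<tau>) \<le> \<delta> / 2"
  proof -
    show "0 < \<tau>" using pos K by (simp add: \<tau>_def)
    show "\<tau> \<le> 1/4" unfolding \<tau>_def by (rule min.cobounded1)
    have "K * (2 * \<tau>) \<le> K * (2 * (\<delta> / (4 * (K + 1))))"
      using K by (intro mult_left_mono) (auto simp: \<tau>_def)
    also have "\<dots> \<le> \<delta> / 2" using K pos by (simp add: field_simps)
    finally show "K * (2 * \<tau>) \<le> \<delta> / 2" .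
  qed
  have "0 < \<delta> / 2" "0 < \<tau>\<^sup>2" using pos tau(1) by simp_all
  then obtain w where w: "w \<in> l2_half" "l2norm w = 1" "l2norm (shifted_jacobi a b x w) \<le> \<delta> / 2"
    "(\<Sum>n<L. (w n)\<^sup>2) < \<tau>\<^sup>2"
    by (rule quasimode_small_initial_mass[OF bij nb])
  have ws: "sq_summable w" and w0: "w 0 = 0" using w(1) by (auto simp: l2_half_iff)
  define rest where "rest N n = (if L \<le> n \<and> n < N then 0 else w n)" for N n
  obtain N where N: "L \<le> N" "sq_summable (rest N)" "l2norm (rest N) \<le> 2 * \<tau>"
    using truncate_to_window[OF ws less_imp_le[OF w(4)] tau(1)] unfolding rest_def by blast
  have rest_l2: "rest N \<in> l2_half" using N(2) w0 by (simp add: l2_half_iff rest_def)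
  define u where "u n = (if L \<le> n \<and> n < N then w n else 0)" for n
  have u_eq: "u = (\<lambda>n. w n - rest N n)" by (auto simp: u_def rest_def)
  have u_l2: "u \<in> l2_half" unfolding u_eq by (rule l2_half_diff[OF w(1) rest_l2])
  have "l2norm w \<le> l2norm u + l2norm (rest N)"
    using l2norm_add(2)[of u "rest N"] u_l2 N(2) by (simp add: u_eq l2_half_iff)
  then have "1/2 \<le> l2norm u" using w(2) N(3) tau(2) by linarith
  then have "(1/2)\<^sup>2 \<le> (l2norm u)\<^sup>2" by (rule power_mono) simp
  then have mass: "1/4 \<le> sqnorm u" unfolding l2norm_squared by (simp add: power2_eq_square)
  have defect: "l2norm (shifted_jacobi a b x u) \<le> \<delta>"
  proof -
    have "l2norm (shifted_jacobi a b x u)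
        \<le> l2norm (shifted_jacobi a b x w) + l2norm (shifted_jacobi a b x (rest N))"
      unfolding u_eq shifted_jacobi_diff
      by (rule l2norm_diff(2)) (use shifted_jacobi_bound(1) w(1) rest_l2 in \<open>auto simp: l2_half_iff\<close>)
    also have "\<dots> \<le> \<delta> / 2 + K * (2 * \<tau>)"
    proof (rule add_mono)
      show "l2norm (shifted_jacobi a b x (rest N)) \<le> K * (2 * \<tau>)"
        using shifted_jacobi_bound(2)[OF rest_l2, of x] mult_left_mono[OF N(3) K]
        unfolding K_def by linarith
    qed (rule w(3))
    finally show ?thesis using tau(3) by linarith
  qed
  have supp: "u n \<noteq> 0 \<Longrightarrow> L \<le> n \<and> n \<le> N" for n by (simp add: u_def split: if_splits)
  show ?thesis using that[OF u_l2 supp mass defect] by blast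
qed

end

lemma square_sum_disjoint:
  assumes "finite F" "\<And>k k'. k \<in> F \<Longrightarrow> k' \<in> F \<Longrightarrow> g k \<noteq> 0 \<Longrightarrow> g k' \<noteq> 0 \<Longrightarrow> k = k'"
  shows "(\<Sum>k\<in>F. g k)\<^sup>2 = (\<Sum>k\<in>F. (g k)\<^sup>2::real)"
proof (cases "\<exists>k\<in>F. g k \<noteq> 0")
  case True
  then obtain k where k: "k \<in> F" "g k \<noteq> 0" by blast
  have "g k' = 0" if "k' \<in> F" "k' \<noteq> k" for k' using assms(2)[OF that(1) k(1)] k(2) that(2) by blast
  then have "(\<Sum>k'\<in>F. g k') = g k" "(\<Sum>k'\<in>F. (g k')\<^sup>2) = (g k)\<^sup>2"
    using k(1) assms(1) by (auto intro!: sum.delta_remove[THEN trans] simp: sum.remove[OF assms(1) k(1)] sum.neutral)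
  then show ?thesis by simp
qed simp

text \<open>Infinite sums of families g k with g k n = 0 for k > n + 1, restricted to k \<in> S; at each
  coordinate only finitely many terms contribute.\<close>
definition band_sum :: "(nat \<Rightarrow> nat \<Rightarrow> real) \<Rightarrow> nat set \<Rightarrow> nat \<Rightarrow> real" where
  "band_sum g S n = (\<Sum>k\<in>S \<inter> {..<n + 2}. g k n)"

lemma band_sum_eq:
  assumes band: "\<And>k n. g k n \<noteq> 0 \<Longrightarrow> k \<le> n + 1" and K: "n + 2 \<le> K"
  shows "(\<Sum>k\<in>S \<inter> {..<K}. g k n) = band_sum g S n"
  unfolding band_sum_def
proof (rule sum.mono_neutral_right)
  show "\<forall>i\<in>S \<inter> {..<K} - S \<inter> {..<n + 2}. g i n = 0" using band by force
qed (use K in auto)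

lemma band_sum_partial_sqsum:
  assumes band: "\<And>k n. g k n \<noteq> 0 \<Longrightarrow> k \<le> n + 1"
    and disj: "\<And>k k' n. g k n \<noteq> 0 \<Longrightarrow> g k' n \<noteq> 0 \<Longrightarrow> k = k'"
  shows "(\<Sum>n<N. (band_sum g S n)\<^sup>2) = (\<Sum>k\<in>S \<inter> {..<N + 1}. \<Sum>n<N. (g k n)\<^sup>2)"
proof -
  have "(\<Sum>n<N. (band_sum g S n)\<^sup>2) = (\<Sum>n<N. (\<Sum>k\<in>S \<inter> {..<N + 1}. g k n)\<^sup>2)"
    by (intro sum.cong refl) (subst band_sum_eq[OF band, symmetric], auto)
  also have "\<dots> = (\<Sum>n<N. \<Sum>k\<in>S \<inter> {..<N + 1}. (g k n)\<^sup>2)"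
    by (intro sum.cong refl square_sum_disjoint) (auto intro: disj)
  also have "\<dots> = (\<Sum>k\<in>S \<inter> {..<N + 1}. \<Sum>n<N. (g k n)\<^sup>2)" by (rule sum.swap)
  finally show ?thesis .
qed

context bounded_jacobi
begin

lemma disjoint_quasimodes_exist:
  assumes bij: "bij_betw (shifted_jacobi a b x) l2_half l2_half"
    and nb: "\<not> bounded_below (shifted_jacobi a b x)"
  obtains v :: "nat \<Rightarrow> nat \<Rightarrow> real" and lo hi :: "nat \<Rightarrow> nat" where
    "\<And>k. v k \<in> l2_half" "\<And>k n. v k n \<noteq> 0 \<Longrightarrow> lo k \<le> n \<and> n \<le> hi k"
    "\<And>k. 1/4 \<le> sqnorm (v k)" "\<And>k. l2norm (shifted_jacobi a b x (v k)) \<le> (1/2) ^ k"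
    "\<And>k. hi k + 3 \<le> lo (Suc k)"
proof -
  define Q where "Q L \<delta> p \<longleftrightarrow> snd p \<in> l2_half \<and> (\<forall>n. snd p n \<noteq> 0 \<longrightarrow> L \<le> n \<and> n \<le> fst p)
      \<and> 1/4 \<le> sqnorm (snd p) \<and> l2norm (shifted_jacobi a b x (snd p)) \<le> \<delta>"
    for L \<delta> and p :: "nat \<times> (nat \<Rightarrow> real)"
  have exQ: "\<exists>p. Q L ((1/2) ^ k) p" for L k
  proof -
    have "0 < (1/2 :: real) ^ k" by simp
    then obtain u R where "u \<in> l2_half" "\<And>n. u n \<noteq> 0 \<Longrightarrow> L \<le> n \<and> n \<le> R" "1/4 \<le> sqnorm u"
      "l2norm (shifted_jacobi a b x u) \<le> (1/2) ^ k"
      by (rule localized_quasimode[OF bij nb, where L = L]) blast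
    then show ?thesis by (intro exI[of _ "(R, u)"]) (simp add: Q_def)
  qed
  define st where "st = rec_nat (SOME p. Q 0 1 p) (\<lambda>k p. SOME p'. Q (fst p + 3) ((1/2) ^ Suc k) p')"
  define lo where "lo k = (case k of 0 \<Rightarrow> 0 | Suc k' \<Rightarrow> fst (st k') + 3)" for k
  have "Q (lo k) ((1/2) ^ k) (st k)" for k
  proof (cases k)
    case 0 then show ?thesis using someI_ex[OF exQ[of 0 0]] by (simp add: st_def lo_def)
  next
    case (Suc k')
    then show ?thesis using someI_ex[OF exQ[of "fst (st k') + 3" k]] by (simp add: st_def lo_def)
  qed
  then show ?thesis
    by (intro that[of "\<lambda>k. snd (st k)" lo "\<lambda>k. fst (st k)"]) (simp_all add: Q_def lo_def)
qed

end

locale quasimode_family = bounded_jacobi +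
  fixes x :: real and v :: "nat \<Rightarrow> nat \<Rightarrow> real" and lo hi :: "nat \<Rightarrow> nat"
  assumes v_l2: "\<And>k. v k \<in> l2_half"
    and v_support: "\<And>k n. v k n \<noteq> 0 \<Longrightarrow> lo k \<le> n \<and> n \<le> hi k"
    and v_mass: "\<And>k. 1/4 \<le> sqnorm (v k)"
    and v_defect: "\<And>k. l2norm (shifted_jacobi a b x (v k)) \<le> (1/2) ^ k"
    and window_gap: "\<And>k. hi k + 3 \<le> lo (Suc k)"
begin

lemma lo_le_hi: "lo k \<le> hi k"
proof -
  have "v k \<noteq> (\<lambda>n. 0)" using v_mass[of k] by (auto simp: sqnorm_def sq_summable_def)
  then obtain n where "v k n \<noteq> 0" by auto
  then show ?thesis using v_support by (meson le_trans)
qed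

lemma windows_separated: "k < k' \<Longrightarrow> hi k + 3 \<le> lo k'"
proof (induction k')
  case (Suc k')
  then show ?case using window_gap[of k'] lo_le_hi[of k'] by (cases "k = k'") auto
qed simp

lemma index_le_lo: "k \<le> lo k"
proof (induction k)
  case (Suc k)
  then show ?case using lo_le_hi[of k] window_gap[of k] by linarith
qed simp

lemma defect_support:
  assumes "shifted_jacobi a b x (v k) n \<noteq> 0"
  shows "lo k \<le> n + 1 \<and> n \<le> hi k + 1"
proof (rule ccontr)
  assume out: "\<not> (lo k \<le> n + 1 \<and> n \<le> hi k + 1)"
  have "v k m = 0" if "m \<le> n + 1" "n \<le> m + 1" for m using v_support[of k m] out that by force
  moreover have "v k 0 = 0" using v_l2 by (simp add: l2_half_iff)
  ultimately have "shifted_jacobi a b x (v k) n = 0"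
    by (cases n) (auto simp: shifted_jacobi_def jacobi_op_def)
  then show False using assms by simp
qed

lemma v_band: "v k n \<noteq> 0 \<Longrightarrow> k \<le> n + 1"
  using v_support[of k n] index_le_lo[of k] by linarith

lemma defect_band: "shifted_jacobi a b x (v k) n \<noteq> 0 \<Longrightarrow> k \<le> n + 1"
  using defect_support[of k n] index_le_lo[of k] by linarith

lemma windows_disjoint:
  assumes "lo k \<le> n + 1 \<and> n \<le> hi k + 1" "lo k' \<le> n + 1 \<and> n \<le> hi k' + 1"
  shows "k = k'"
proof (rule ccontr)
  assume "k \<noteq> k'"
  then have "hi k + 3 \<le> lo k' \<or> hi k' + 3 \<le> lo k" using windows_separated nat_neq_iff by blast
  then show False using assms by linarith
qed

lemma defects_disjoint:
  "shifted_jacobi a b x (v k) n \<noteq> 0 \<Longrightarrow> shifted_jacobi a b x (v k') n \<noteq> 0 \<Longrightarrow> k = k'"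
  by (intro windows_disjoint defect_support)

definition glued :: "nat set \<Rightarrow> nat \<Rightarrow> real" where
  "glued S = band_sum v S"

lemma glued_0: "glued S 0 = 0"
  using v_l2 by (simp add: glued_def band_sum_def l2_half_iff)

lemma glued_on_window:
  assumes "lo k \<le> n" "n \<le> hi k"
  shows "glued S n = (if k \<in> S then v k n else 0)"
proof -
  have "v k' n = 0" if "k' \<noteq> k" for k'
    using v_support[of k' n] windows_disjoint[of k n k'] assms that by force
  then have "glued S n = (\<Sum>k'\<in>S \<inter> {..<n + 2}. if k' = k then v k n else 0)"
    unfolding glued_def band_sum_def by (intro sum.cong) auto
  moreover have "k < n + 2" using index_le_lo[of k] assms by simp
  ultimately show ?thesis by simp
qed

lemma shifted_glued: "shifted_jacobi a b x (glued S) = band_sum (\<lambda>k. shifted_jacobi a b x (v k)) S"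
proof
  fix n
  let ?F = "\<lambda>m. \<Sum>k\<in>S \<inter> {..<n + 3}. v k m"
  have "glued S m = ?F m" if "m \<le> n + 1" for m
    unfolding glued_def using band_sum_eq[where g = v and n = m and K = "n + 3", OF v_band] that by simp
  then have "shifted_jacobi a b x (glued S) n = shifted_jacobi a b x ?F n"
    by (rule shifted_jacobi_local)
  also have "\<dots> = (\<Sum>k\<in>S \<inter> {..<n + 3}. shifted_jacobi a b x (v k) n)"
    by (simp add: shifted_jacobi_sum)
  also have "\<dots> = band_sum (\<lambda>k. shifted_jacobi a b x (v k)) S n"
    using band_sum_eq[where n = n and K = "n + 3", OF defect_band] by simp
  finally show "shifted_jacobi a b x (glued S) n = band_sum (\<lambda>k. shifted_jacobi a b x (v k)) S n" .
qed

text \<open>The defects are disjointly supported and summable, so J - x maps the glued sequence into l2.\<close>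
lemma shifted_glued_l2: "shifted_jacobi a b x (glued S) \<in> l2_half"
proof -
  let ?t = "\<lambda>k. shifted_jacobi a b x (v k)"
  have "(\<Sum>n<N. (band_sum ?t S n)\<^sup>2) \<le> 2" for N
  proof -
    have "(\<Sum>n<N. (band_sum ?t S n)\<^sup>2) = (\<Sum>k\<in>S \<inter> {..<N + 1}. \<Sum>n<N. (?t k n)\<^sup>2)"
      by (rule band_sum_partial_sqsum[OF defect_band defects_disjoint])
    also have "\<dots> \<le> (\<Sum>k\<in>S \<inter> {..<N + 1}. (1/4) ^ k)"
    proof (rule sum_mono)
      fix k
      have "(\<Sum>n<N. (?t k n)\<^sup>2) \<le> (l2norm (?t k))\<^sup>2"
        using partial_sqsum_le_sqnorm[of "{..<N}" "?t k"] shifted_jacobi_bound(1)[OF v_l2]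
        by (simp add: l2norm_squared l2_half_iff)
      also have "\<dots> \<le> ((1/2) ^ k)\<^sup>2" by (rule power_mono[OF v_defect l2norm_nonneg])
      also have "\<dots> = (1/4) ^ k" by (simp add: power2_eq_square flip: power_mult_distrib)
      finally show "(\<Sum>n<N. (?t k n)\<^sup>2) \<le> (1/4) ^ k" .
    qed
    also have "\<dots> \<le> (\<Sum>k. (1/4::real) ^ k)"
      by (rule sum_le_suminf) (auto intro: summable_geometric)
    also have "\<dots> \<le> 2" by (simp add: suminf_geometric)
    finally show ?thesis .
  qed
  then have "sq_summable (band_sum ?t S)" by (rule sq_summable_if_partial_bounded(1))
  moreover have "shifted_jacobi a b x (glued S) 0 = 0"
    using glued_0 by (simp add: shifted_jacobi_def jacobi_op_def)
  ultimately show ?thesis by (simp add: shifted_glued l2_half_iff)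
qed

end

lemma infinite_evens: "infinite {k :: nat. even k}"
  unfolding infinite_nat_iff_unbounded_le
proof
  show "\<exists>n\<ge>m. n \<in> {k. even k}" for m :: nat by (intro exI[of _ "2 * m"]) auto
qed

lemma infinite_odds: "infinite {k :: nat. odd k}"
  unfolding infinite_nat_iff_unbounded_le
proof
  show "\<exists>n\<ge>m. n \<in> {k. odd k}" for m :: nat by (intro exI[of _ "2 * m + 1"]) auto
qed

context quasimode_family
begin

lemma window_sqnorm: "sqnorm (v k) = (\<Sum>n\<in>{lo k..hi k}. (v k n)\<^sup>2)"
proof -
  have "(v k n)\<^sup>2 = 0" if "n \<notin> {lo k..hi k}" for n using v_support[of k n] that by auto
  then have "(\<Sum>n. (v k n)\<^sup>2) = (\<Sum>n\<in>{lo k..hi k}. (v k n)\<^sup>2)" by (intro suminf_finite) auto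
  then show ?thesis using v_l2[of k] by (simp add: sqnorm_def l2_half_iff)
qed

lemma glued_decomposition:
  assumes bij: "bij_betw (shifted_jacobi a b x) l2_half l2_half"
  obtains w t where "w \<in> l2_half" "glued S = (\<lambda>n. w n - t * poly_vec a b x n)"
proof -
  have "shifted_jacobi a b x (glued S) \<in> shifted_jacobi a b x ` l2_half"
    using bij shifted_glued_l2 by (simp add: bij_betw_def)
  then obtain w where w: "w \<in> l2_half" "shifted_jacobi a b x w = shifted_jacobi a b x (glued S)"
    by (metis imageE)
  define d where "d = (\<lambda>n. w n - glued S n)"
  have "shifted_jacobi a b x d = (\<lambda>n. 0)" unfolding d_def shifted_jacobi_diff w(2) by simp
  moreover have "d 0 = 0" using w(1) glued_0 by (simp add: d_def l2_half_iff)
  ultimately have d: "d = (\<lambda>n. d 1 * poly_vec a b x n)"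
    by (intro eigen_solution_unique) (auto simp: shifted_jacobi_def fun_eq_iff)
  have dn: "d n = w n - glued S n" for n by (simp add: d_def)
  have "glued S n = w n - d 1 * poly_vec a b x n" for n
    using fun_cong[OF d, of n] dn[of n] by linarith
  then have "glued S = (\<lambda>n. w n - d 1 * poly_vec a b x n)" by (rule ext)
  then show ?thesis using that w(1) by blast
qed

text \<open>A square-summable sequence agreeing with s v_k on the windows of infinitely many k must
  have s = 0, because every window carries mass at least s^2 / 4.\<close>
lemma multiple_on_windows_vanishes:
  assumes h: "sq_summable h" and S: "infinite S"
    and agree: "\<And>k n. k \<in> S \<Longrightarrow> lo k \<le> n \<Longrightarrow> n \<le> hi k \<Longrightarrow> h n = s * v k n"
  shows "s = 0"
proof -
  have mass: "s\<^sup>2 * real m / 4 \<le> sqnorm h" for m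
  proof -
    obtain I where I: "I \<subseteq> S" "finite I" "card I = m"
      using infinite_arbitrarily_large[OF S] by blast
    have "s\<^sup>2 * real m / 4 = (\<Sum>k\<in>I. s\<^sup>2 * (1/4))" using I(3) by simp
    also have "\<dots> \<le> (\<Sum>k\<in>I. s\<^sup>2 * sqnorm (v k))"
      by (intro sum_mono mult_left_mono v_mass) simp
    also have "\<dots> = (\<Sum>k\<in>I. \<Sum>n\<in>{lo k..hi k}. (h n)\<^sup>2)"
      using I(1) agree by (auto simp: window_sqnorm sum_distrib_left power_mult_distrib intro!: sum.cong)
    also have "\<dots> = (\<Sum>n\<in>(\<Union>k\<in>I. {lo k..hi k}). (h n)\<^sup>2)"
    proof (intro sum.UNION_disjoint[symmetric] ballI impI)
      show "{lo i..hi i} \<inter> {lo j..hi j} = {}" if "i \<noteq> j" for i j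
      proof -
        have "i = j" if "n \<in> {lo i..hi i}" "n \<in> {lo j..hi j}" for n
          by (rule windows_disjoint[of i n j]) (use that in auto)
        then show ?thesis using \<open>i \<noteq> j\<close> by blast
      qed
    qed (use I(2) in auto)
    also have "\<dots> \<le> sqnorm h" using I(2) by (intro partial_sqsum_le_sqnorm h) simp
    finally show ?thesis .
  qed
  show ?thesis
  proof (rule ccontr)
    assume "s \<noteq> 0"
    then have pos: "0 < s\<^sup>2" by simp
    obtain m :: nat where "4 * sqnorm h / s\<^sup>2 < m" using reals_Archimedean2 by blast
    then have "sqnorm h < s\<^sup>2 * real m / 4" using pos by (simp add: field_simps)
    then show False using mass[of m] by simp
  qed
qed

text \<open>Glue along even and along odd indices.  A suitable combination of the two
  decompositions removes the polynomial solution; the resulting square-summable sequence is a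
  multiple of v_k on each window, forcing both coefficients, and then everything, to vanish.\<close>
theorem no_quasimode_family:
  assumes bij: "bij_betw (shifted_jacobi a b x) l2_half l2_half"
  shows False
proof -
  let ?E = "{k. even k}" and ?O = "{k. odd k}"
  obtain wE tE where E: "wE \<in> l2_half" "glued ?E = (\<lambda>n. wE n - tE * poly_vec a b x n)"
    using glued_decomposition[OF bij] .
  obtain wO tO where O: "wO \<in> l2_half" "glued ?O = (\<lambda>n. wO n - tO * poly_vec a b x n)"
    using glued_decomposition[OF bij] .
  define h where "h n = tO * glued ?E n - tE * glued ?O n" for n
  have "h = (\<lambda>n. tO * wE n - tE * wO n)"
    unfolding h_def E(2) O(2) by (auto simp: algebra_simps)
  then have h_l2: "sq_summable h"
    using l2_half_diff[OF l2_half_scale[OF E(1)] l2_half_scale[OF O(1)]] by (simp add: l2_half_iff)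
  have "tO = 0"
    by (rule multiple_on_windows_vanishes[OF h_l2 infinite_evens])
      (simp add: h_def glued_on_window)
  moreover have "- tE = 0"
    by (rule multiple_on_windows_vanishes[OF h_l2 infinite_odds])
      (simp add: h_def glued_on_window)
  ultimately have "sq_summable (glued ?E)"
    using E by (simp add: l2_half_iff)
  moreover have "1 = (0::real)"
    by (rule multiple_on_windows_vanishes[OF calculation infinite_evens])
      (simp add: glued_on_window)
  ultimately show False by simp
qed

end

context bounded_jacobi
begin

theorem bij_imp_bounded_below:
  assumes bij: "bij_betw (shifted_jacobi a b x) l2_half l2_half"
  shows "bounded_below (shifted_jacobi a b x)"
proof (rule ccontr)
  assume "\<not> bounded_below (shifted_jacobi a b x)"
  then obtain v lo hi where "\<And>k. v k \<in> l2_half" "\<And>k n. v k n \<noteq> 0 \<Longrightarrow> lo k \<le> n \<and> n \<le> hi k"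
    "\<And>k. 1/4 \<le> sqnorm (v k)" "\<And>k. l2norm (shifted_jacobi a b x (v k)) \<le> (1/2) ^ k"
    "\<And>k. hi k + 3 \<le> lo (Suc k)"
    by (rule disjoint_quasimodes_exist[OF bij]) blast
  then have family: "quasimode_family a b c C B x v lo hi"
    by (intro quasimode_family.intro bounded_jacobi_axioms quasimode_family_axioms.intro)
  show False using quasimode_family.no_quasimode_family[OF family bij] .
qed

end

subsection \<open>The spectrum is compact; discrete eigenvalues\<close>

lemma scale_bij:
  assumes "k \<noteq> (0::real)"
  shows "bij_betw (\<lambda>u n. k * u n) l2_half l2_half"
proof (rule bij_betwI[where g = "\<lambda>u n. (1 / k) * u n"])
  show "(\<lambda>u n. k * u n) \<in> l2_half \<rightarrow> l2_half" "(\<lambda>u n. (1 / k) * u n) \<in> l2_half \<rightarrow> l2_half"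
    using l2_half_scale by blast+
qed (use assms in auto)

context bounded_jacobi
begin

text \<open>For |y| > op_bound, J - y = (-y) + J is a small perturbation of the invertible -y.\<close>
lemma spectrum_bounded:
  assumes "y \<in> jacobi_spectrum a b"
  shows "\<bar>y\<bar> \<le> op_bound"
proof (rule ccontr)
  assume big: "\<not> \<bar>y\<bar> \<le> op_bound"
  have "l2_perturbation (\<lambda>u n. - y * u n) (jacobi_op a b) \<bar>y\<bar> op_bound"
  proof
    show "bij_betw (\<lambda>u n. - y * u n) l2_half l2_half"
      using big op_bound_nonneg by (intro scale_bij) auto
    show "\<bar>y\<bar> * l2norm u \<le> l2norm (\<lambda>n. - y * u n)" for u unfolding l2norm_scale by simp
    show "l2norm (jacobi_op a b u) \<le> op_bound * l2norm u" if "u \<in> l2_half" for u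
      using jacobi_op_bound(2)[OF that] .
    show "coordwise_continuous (\<lambda>u n. - y * u n)" by (rule coordwise_continuous_scale)
  qed (use big jacobi_op_l2 jacobi_op_diff op_bound_nonneg coordwise_continuous_jacobi
       in \<open>auto simp: algebra_simps\<close>)
  then have "bij_betw (\<lambda>u n. - y * u n + jacobi_op a b u n) l2_half l2_half"
    by (rule l2_perturbation.sum_bij)
  moreover have "(\<lambda>u n. - y * u n + jacobi_op a b u n) = shifted_jacobi a b y"
    by (simp add: shifted_jacobi_def fun_eq_iff)
  ultimately show False using assms jacobi_spectrum_iff by simp
qed

text \<open>Near a point x of the resolvent set, J - y = (J - x) + (x - y) is a small perturbation
  of a bijection that is bounded below.\<close>
lemma resolvent_set_open:
  assumes "x \<notin> jacobi_spectrum a b"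
  shows "\<exists>e>0. \<forall>y. \<bar>y - x\<bar> < e \<longrightarrow> y \<notin> jacobi_spectrum a b"
proof -
  have bij: "bij_betw (shifted_jacobi a b x) l2_half l2_half" using assms jacobi_spectrum_iff by simp
  obtain c0 where c0: "0 < c0" "\<And>u. u \<in> l2_half \<Longrightarrow> c0 * l2norm u \<le> l2norm (shifted_jacobi a b x u)"
    using bij_imp_bounded_below[OF bij] unfolding bounded_below_def by blast
  have "y \<notin> jacobi_spectrum a b" if y: "\<bar>y - x\<bar> < c0" for y
  proof -
    have "l2_perturbation (shifted_jacobi a b x) (\<lambda>u n. (x - y) * u n) c0 \<bar>x - y\<bar>"
    proof
      show "bij_betw (shifted_jacobi a b x) l2_half l2_half" by (rule bij)
      show "(\<lambda>n. (x - y) * u n) \<in> l2_half" if "u \<in> l2_half" for u using l2_half_scale[OF that] .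
      show "shifted_jacobi a b x (\<lambda>n. u n - v n)
          = (\<lambda>n. shifted_jacobi a b x u n - shifted_jacobi a b x v n)" for u v
        by (rule shifted_jacobi_diff)
      show "(\<lambda>n. (x - y) * (u n - v n)) = (\<lambda>n. (x - y) * u n - (x - y) * v n)"
        for u v :: "nat \<Rightarrow> real"
        by (simp add: algebra_simps)
      show "c0 * l2norm u \<le> l2norm (shifted_jacobi a b x u)" if "u \<in> l2_half" for u
        by (rule c0(2)[OF that])
      show "l2norm (\<lambda>n. (x - y) * u n) \<le> \<bar>x - y\<bar> * l2norm u" for u unfolding l2norm_scale by simp
      show "0 \<le> \<bar>x - y\<bar>" "\<bar>x - y\<bar> < c0" using y by simp_all
      show "coordwise_continuous (shifted_jacobi a b x)" by (rule coordwise_continuous_shifted_jacobi)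
      show "coordwise_continuous (\<lambda>u n. (x - y) * u n)" by (rule coordwise_continuous_scale)
    qed
    then have "bij_betw (\<lambda>u n. shifted_jacobi a b x u n + (x - y) * u n) l2_half l2_half"
      by (rule l2_perturbation.sum_bij)
    moreover have "(\<lambda>u n. shifted_jacobi a b x u n + (x - y) * u n) = shifted_jacobi a b y"
      by (simp add: shifted_jacobi_def fun_eq_iff algebra_simps)
    ultimately show ?thesis using jacobi_spectrum_iff by simp
  qed
  then show ?thesis using c0(1) by blast
qed

lemma spectrum_compact: "compact (jacobi_spectrum a b)"
proof -
  have "closed (jacobi_spectrum a b)"
    unfolding closed_def open_dist using resolvent_set_open by (simp add: dist_real_def)
  moreover have "bounded (jacobi_spectrum a b)"
    unfolding bounded_iff using spectrum_bounded by auto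
  ultimately show ?thesis by (simp add: compact_eq_bounded_closed)
qed

text \<open>A point of the discrete spectrum is an eigenvalue, so the polynomial solution is
  square-summable there.\<close>
lemma disc_spectrum_poly_vec:
  assumes "x \<in> jacobi_disc_spectrum a b"
  shows "sq_summable (poly_vec a b x)"
proof -
  have "(\<lambda>n. 0) \<in> jacobi_eigenspace a b x"
    by (simp add: jacobi_eigenspace_def l2_half_zero jacobi_op_def fun_eq_iff)
  then obtain u where u: "u \<in> jacobi_eigenspace a b x" "u \<noteq> (\<lambda>n. 0)"
    using assms by (auto simp: jacobi_disc_spectrum_def)
  then have ul: "u \<in> l2_half" and ue: "jacobi_op a b u = (\<lambda>n. x * u n)"
    by (auto simp: jacobi_eigenspace_def)
  have u_eq: "u = (\<lambda>n. u 1 * poly_vec a b x n)"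
    by (rule eigen_solution_unique) (use ul ue in \<open>auto simp: l2_half_iff\<close>)
  then have "u 1 \<noteq> 0" using u(2) by (metis mult_zero_left)
  then have "poly_vec a b x = (\<lambda>n. (1 / u 1) * u n)" by (subst u_eq) auto
  moreover have "sq_summable (\<lambda>n. (1 / u 1) * u n)"
    by (rule sq_summable_scale) (use ul in \<open>simp add: l2_half_iff\<close>)
  ultimately show ?thesis by simp
qed

end

subsection \<open>Right limits and the set Xi\<close>

text \<open>If sequences U j satisfy, eventually in j, three-term recurrences whose coefficients
  converge with nonzero off-diagonal limits, and U j 0 and U j (-1) converge, then every
  U j k converges: solve the recurrence for U j (k + 1), resp. U j (k - 1), and induct.\<close>
lemma recurrence_convergence:
  fixes U A B :: "nat \<Rightarrow> int \<Rightarrow> real"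
  assumes xs: "xs \<longlonglongrightarrow> x0"
    and A: "\<And>k. (\<lambda>j. A j k) \<longlonglongrightarrow> ar k" and B: "\<And>k. (\<lambda>j. B j k) \<longlonglongrightarrow> br k"
    and ar: "\<And>k. ar k \<noteq> 0"
    and rec: "\<And>k. \<forall>\<^sub>F j in sequentially.
                xs j * U j k = A j k * U j (k + 1) + B j k * U j k + A j (k - 1) * U j (k - 1)"
    and start: "convergent (\<lambda>j. U j 0)" "convergent (\<lambda>j. U j (-1))"
  shows "convergent (\<lambda>j. U j k)"
proof -
  have A_ne: "\<forall>\<^sub>F j in sequentially. A j k \<noteq> 0" for k
    using tendsto_imp_eventually_ne[OF A ar] .
  have up: "convergent (\<lambda>j. U j (k + 1))"
    if "(\<lambda>j. U j k) \<longlonglongrightarrow> p" "(\<lambda>j. U j (k - 1)) \<longlonglongrightarrow> q" for k p q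
  proof -
    have "(\<lambda>j. (xs j * U j k - B j k * U j k - A j (k - 1) * U j (k - 1)) / A j k)
        \<longlonglongrightarrow> (x0 * p - br k * p - ar (k - 1) * q) / ar k"
      by (intro tendsto_intros xs A B that ar)
    moreover have "\<forall>\<^sub>F j in sequentially.
        (xs j * U j k - B j k * U j k - A j (k - 1) * U j (k - 1)) / A j k = U j (k + 1)"
      using eventually_conj[OF rec[of k] A_ne[of k]] by eventually_elim (auto simp: field_simps)
    ultimately have "(\<lambda>j. U j (k + 1)) \<longlonglongrightarrow> (x0 * p - br k * p - ar (k - 1) * q) / ar k"
      by (rule Lim_transform_eventually)
    then show ?thesis unfolding convergent_def by blast
  qed
  have down: "convergent (\<lambda>j. U j (k - 1))"
    if "(\<lambda>j. U j k) \<longlonglongrightarrow> p" "(\<lambda>j. U j (k + 1)) \<longlonglongrightarrow> q" for k p q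
  proof -
    have "(\<lambda>j. (xs j * U j k - A j k * U j (k + 1) - B j k * U j k) / A j (k - 1))
        \<longlonglongrightarrow> (x0 * p - ar k * q - br k * p) / ar (k - 1)"
      by (intro tendsto_intros xs A B that ar)
    moreover have "\<forall>\<^sub>F j in sequentially.
        (xs j * U j k - A j k * U j (k + 1) - B j k * U j k) / A j (k - 1) = U j (k - 1)"
      using eventually_conj[OF rec[of k] A_ne[of "k - 1"]] by eventually_elim (auto simp: field_simps)
    ultimately have "(\<lambda>j. U j (k - 1)) \<longlonglongrightarrow> (x0 * p - ar k * q - br k * p) / ar (k - 1)"
      by (rule Lim_transform_eventually)
    then show ?thesis unfolding convergent_def by blast
  qed
  have upward: "convergent (\<lambda>j. U j (int i)) \<and> convergent (\<lambda>j. U j (int i - 1))" for i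
  proof (induction i)
    case (Suc i)
    then show ?case using up[of "int i"] by (auto simp: convergent_def add.commute)
  qed (use start in simp)
  have downward: "convergent (\<lambda>j. U j (- int i)) \<and> convergent (\<lambda>j. U j (- int i + 1))" for i
  proof (induction i)
    case 0 then show ?case using upward[of 1] by simp
  next
    case (Suc i)
    then have "convergent (\<lambda>j. U j (- int i - 1))" using down[of "- int i"] by (auto simp: convergent_def)
    moreover have "- int (Suc i) = - int i - 1" "- int (Suc i) + 1 = - int i" by simp_all
    ultimately show ?case using Suc by (simp only:)
  qed
  show ?thesis using upward[of "nat k"] downward[of "nat (- k)"] by (cases "0 \<le> k") auto
qed

lemma recurrence_limit:
  fixes U A B :: "nat \<Rightarrow> int \<Rightarrow> real"
  assumes xs: "xs \<longlonglongrightarrow> x0"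
    and A: "\<And>k. (\<lambda>j. A j k) \<longlonglongrightarrow> ar k" and B: "\<And>k. (\<lambda>j. B j k) \<longlonglongrightarrow> br k"
    and ar: "\<And>k. ar k \<noteq> 0"
    and rec: "\<And>k. \<forall>\<^sub>F j in sequentially.
                xs j * U j k = A j k * U j (k + 1) + B j k * U j k + A j (k - 1) * U j (k - 1)"
    and start: "convergent (\<lambda>j. U j 0)" "convergent (\<lambda>j. U j (-1))"
  obtains W where "\<And>k. (\<lambda>j. U j k) \<longlonglongrightarrow> W k"
    "\<And>k. ar k * W (k + 1) + br k * W k + ar (k - 1) * W (k - 1) = x0 * W k"
proof -
  define W where "W k = lim (\<lambda>j. U j k)" for k
  have W: "(\<lambda>j. U j k) \<longlonglongrightarrow> W k" for k
    using recurrence_convergence[OF assms] by (simp add: W_def convergent_LIMSEQ_iff)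
  have "ar k * W (k + 1) + br k * W k + ar (k - 1) * W (k - 1) = x0 * W k" for k
  proof -
    have "(\<lambda>j. A j k * U j (k + 1) + B j k * U j k + A j (k - 1) * U j (k - 1))
        \<longlonglongrightarrow> ar k * W (k + 1) + br k * W k + ar (k - 1) * W (k - 1)"
      by (intro tendsto_intros A B W)
    then have "(\<lambda>j. xs j * U j k) \<longlonglongrightarrow> ar k * W (k + 1) + br k * W k + ar (k - 1) * W (k - 1)"
      by (rule Lim_transform_eventually) (use rec[of k] in \<open>simp add: eq_commute\<close>)
    moreover have "(\<lambda>j. xs j * U j k) \<longlonglongrightarrow> x0 * W k" by (intro tendsto_intros xs W)
    ultimately show ?thesis by (rule LIMSEQ_unique)
  qed
  then show ?thesis using that W by blast
qed

lemma not_in_Xi_set: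
  assumes "is_right_limit a b ar br"
    and sol: "\<And>k. ar k * U (k + 1) + br k * U k + ar (k - 1) * U (k - 1) = x0 * U k"
    and nonzero: "U 0 \<noteq> 0" and l2: "summable (\<lambda>i::nat. (U (- int i))\<^sup>2)"
  shows "x0 \<notin> Xi_set a b"
proof
  assume "x0 \<in> Xi_set a b"
  then have no_l2: "\<forall>u. (\<forall>n. of_real (ar n) * u (n + 1) + of_real (br n) * u n
        + of_real (ar (n - 1)) * u (n - 1) = of_real x0 * u n) \<and> u \<noteq> (\<lambda>n. 0)
      \<longrightarrow> \<not> summable (\<lambda>k::nat. (cmod (u (- int k)))\<^sup>2)"
    using assms(1) unfolding Xi_set_def by blast
  have eq: "of_real (ar k) * complex_of_real (U (k + 1)) + of_real (br k) * complex_of_real (U k)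
      + of_real (ar (k - 1)) * complex_of_real (U (k - 1)) = of_real x0 * complex_of_real (U k)" for k
    using arg_cong[OF sol[of k], of complex_of_real] by simp
  moreover have "(\<lambda>k. complex_of_real (U k)) \<noteq> (\<lambda>k. 0)" using nonzero by (auto simp: fun_eq_iff)
  ultimately have "\<not> summable (\<lambda>i::nat. (cmod (complex_of_real (U (- int i))))\<^sup>2)"
    using spec[OF no_l2, of "\<lambda>k. complex_of_real (U k)"] by blast
  then show False using l2 by simp
qed

lemma CD_kernel_ge:
  shows "(opoly a b n x)\<^sup>2 \<le> CD_kernel a b n x x" "1 \<le> CD_kernel a b n x x"
proof -
  have K: "CD_kernel a b n x x = (\<Sum>j\<le>n. (opoly a b j x)\<^sup>2)"
    by (simp add: CD_kernel_def power2_eq_square)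
  show "(opoly a b n x)\<^sup>2 \<le> CD_kernel a b n x x"
    unfolding K by (rule member_le_sum) auto
  show "1 \<le> CD_kernel a b n x x"
    unfolding K using member_le_sum[of 0 "{..n}" "\<lambda>j. (opoly a b j x)\<^sup>2"] by simp
qed

context bounded_jacobi
begin

definition tail_vec :: "real \<Rightarrow> nat \<Rightarrow> int \<Rightarrow> real" where
  "tail_vec x N k = (if 0 \<le> int N + k then opoly a b (nat (int N + k)) x / opoly a b N x else 0)"

lemma tail_vec_0: "opoly a b N x \<noteq> 0 \<Longrightarrow> tail_vec x N 0 = 1"
  by (simp add: tail_vec_def)

text \<open>The recurrence, with the Jacobi parameters read off from site N + 1 on.\<close>
lemma tail_vec_recurrence:
  assumes nz: "opoly a b N x \<noteq> 0" and k: "0 \<le> int N + k"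
  shows "x * tail_vec x N k = a (nat (int (N + 1) + k)) * tail_vec x N (k + 1)
      + b (nat (int (N + 1) + k)) * tail_vec x N k + a (nat (int (N + 1) + (k - 1))) * tail_vec x N (k - 1)"
proof -
  define M where "M = nat (int N + k)"
  have M: "int M = int N + k" using k by (simp add: M_def)
  have coeff: "nat (int (N + 1) + k) = M + 1" "nat (int (N + 1) + (k - 1)) = M" using M by simp_all
  have sites: "int N + k = int M" "int N + (k + 1) = int (M + 1)" "int N + (k - 1) = int M - 1"
    using M by simp_all
  have vals: "tail_vec x N k = opoly a b M x / opoly a b N x"
      "tail_vec x N (k + 1) = opoly a b (M + 1) x / opoly a b N x"
      "tail_vec x N (k - 1) = (if M = 0 then 0 else opoly a b (M - 1) x / opoly a b N x)"
    unfolding tail_vec_def sites nat_int by (auto simp: nat_diff_distrib)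
  show ?thesis
    unfolding coeff vals using opoly_recurrence[of x M] nz by (auto simp: field_simps)
qed

lemma tail_vec_sqsum:
  assumes nz: "opoly a b N x \<noteq> 0"
  shows "(\<Sum>i<L. (tail_vec x N (- int i))\<^sup>2) \<le> CD_kernel a b N x x / (opoly a b N x)\<^sup>2"
proof -
  define f where "f i = (if i \<le> N then (opoly a b (N - i) x / opoly a b N x)\<^sup>2 else 0)" for i
  have "(\<Sum>i<L. (tail_vec x N (- int i))\<^sup>2) = (\<Sum>i<L. f i)"
    by (intro sum.cong) (auto simp: tail_vec_def f_def nat_diff_distrib')
  also have "\<dots> \<le> (\<Sum>i\<in>{..<L} \<union> {..N}. f i)" by (rule sum_mono2) (auto simp: f_def)
  also have "\<dots> = (\<Sum>i\<le>N. (opoly a b (N - i) x / opoly a b N x)\<^sup>2)"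
    by (rule sum.mono_neutral_cong_right) (auto simp: f_def)
  also have "\<dots> = (\<Sum>i\<le>N. (opoly a b i x / opoly a b N x)\<^sup>2)"
    using sum.atLeastAtMost_rev[of "\<lambda>i. (opoly a b i x / opoly a b N x)\<^sup>2" 0 N] by (simp add: atMost_atLeast0)
  also have "\<dots> = CD_kernel a b N x x / (opoly a b N x)\<^sup>2"
    by (simp add: CD_kernel_def sum_divide_distrib power_divide power2_eq_square)
  finally show ?thesis .
qed

lemma tail_vec_concentrated:
  assumes eps: "0 < \<epsilon>" and conc: "\<epsilon> * CD_kernel a b N x x \<le> (opoly a b N x)\<^sup>2"
  shows "opoly a b N x \<noteq> 0" "(\<Sum>i<L. (tail_vec x N (- int i))\<^sup>2) \<le> 1 / \<epsilon>"
    "\<bar>tail_vec x N (-1)\<bar> \<le> 1 + 1 / \<epsilon>"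
proof -
  have "0 < \<epsilon> * CD_kernel a b N x x" using eps CD_kernel_ge(2)[of a b N x] by simp
  then have pos: "0 < (opoly a b N x)\<^sup>2" using conc by linarith
  then show nz: "opoly a b N x \<noteq> 0" by simp
  have "CD_kernel a b N x x / (opoly a b N x)\<^sup>2 \<le> 1 / \<epsilon>"
    using conc pos eps by (simp add: field_simps)
  then show mass: "(\<Sum>i<L. (tail_vec x N (- int i))\<^sup>2) \<le> 1 / \<epsilon>" for L
    using tail_vec_sqsum[OF nz, of L] by simp
  have "(tail_vec x N 0)\<^sup>2 + (tail_vec x N (-1))\<^sup>2 \<le> 1 / \<epsilon>"
    using mass[of 2] by (simp add: numeral_2_eq_2)
  then have sq: "(tail_vec x N (-1))\<^sup>2 \<le> 1 / \<epsilon>" using zero_le_power2[of "tail_vec x N 0"] by linarith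
  have "\<bar>t\<bar> \<le> 1 + t\<^sup>2" for t :: real
  proof (cases "\<bar>t\<bar> \<le> 1")
    case False
    then have "\<bar>t\<bar> * 1 \<le> \<bar>t\<bar> * \<bar>t\<bar>" by (intro mult_left_mono) auto
    then show ?thesis by (simp add: power2_eq_square)
  qed (use zero_le_power2[of t] in linarith)
  then show "\<bar>tail_vec x N (-1)\<bar> \<le> 1 + 1 / \<epsilon>" using sq by (smt (verit))
qed

lemma coefficient_subseq:
  fixes g :: "nat \<Rightarrow> real" and ns :: "nat \<Rightarrow> nat"
  assumes g: "\<And>j. \<bar>g j\<bar> \<le> G"
  obtains r :: "nat \<Rightarrow> nat" and ar br :: "int \<Rightarrow> real" where "strict_mono r"
    "\<And>k. (\<lambda>j. a (nat (int (ns (r j) + 1) + k))) \<longlonglongrightarrow> ar k"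
    "\<And>k. (\<lambda>j. b (nat (int (ns (r j) + 1) + k))) \<longlonglongrightarrow> br k"
    "convergent (\<lambda>j. g (r j))"
proof -
  define F where "F j kt = (if snd kt = 0 then a (nat (int (ns j + 1) + fst kt))
      else if snd kt = 1 then b (nat (int (ns j + 1) + fst kt)) else g j)" for j and kt :: "int \<times> nat"
  define R where "R = \<bar>a 0\<bar> + C + \<bar>b 0\<bar> + B + \<bar>G\<bar>"
  have nonneg: "0 \<le> \<bar>a 0\<bar>" "0 \<le> \<bar>b 0\<bar>" "0 \<le> \<bar>G\<bar>" "0 \<le> C" "0 \<le> B"
    using C_pos B_nonneg by simp_all
  have a_bd: "\<bar>a m\<bar> \<le> \<bar>a 0\<bar> + C" and b_bd: "\<bar>b m\<bar> \<le> \<bar>b 0\<bar> + B" for m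
    using abs_a_le[of m] b_bound[of m] nonneg by (cases "m = 0"; simp)+
  have "\<bar>a m\<bar> \<le> R" "\<bar>b m\<bar> \<le> R" "\<bar>g j\<bar> \<le> R" for m j
    using a_bd[of m] b_bd[of m] g[of j] nonneg unfolding R_def by linarith+
  then have "\<bar>F j kt\<bar> \<le> R" for j kt unfolding F_def by auto
  then obtain r where r: "strict_mono r" "\<And>kt. (\<lambda>j. F (r j) kt) \<longlonglongrightarrow> lim (\<lambda>j. F (r j) kt)"
    using bounded_family_convergent_subseq[of F "\<lambda>_. R"] by blast
  show ?thesis
  proof (rule that[OF r(1)])
    show "(\<lambda>j. a (nat (int (ns (r j) + 1) + k))) \<longlonglongrightarrow> lim (\<lambda>j. F (r j) (k, 0))" for k
      using r(2)[of "(k, 0)"] by (simp add: F_def)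
    show "(\<lambda>j. b (nat (int (ns (r j) + 1) + k))) \<longlonglongrightarrow> lim (\<lambda>j. F (r j) (k, 1))" for k
      using r(2)[of "(k, 1)"] by (simp add: F_def)
    show "convergent (\<lambda>j. g (r j))"
      using r(2)[of "(0, 2)"] by (auto simp: F_def convergent_def numeral_2_eq_2)
  qed
qed

end

context bounded_jacobi
begin

text \<open>If the Christoffel-type ratio p_n(x)^2 / K_n(x,x) stays above \<epsilon> along
  points x_j \<rightarrow> x0 and degrees n_j \<rightarrow> \<infinity>, then the normalized polynomial solutions seen from the
  sites n_j have a limit along a subsequence: a nonzero solution for a right limit of J at
  energy x0 whose mass on the left half-line is at most 1/\<epsilon>.  Hence x0 is not in Xi.\<close>
lemma concentration_excludes_Xi:
  fixes xs :: "nat \<Rightarrow> real" and ns :: "nat \<Rightarrow> nat"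
  assumes xs: "xs \<longlonglongrightarrow> x0" and ns: "filterlim ns at_top sequentially" and eps: "0 < \<epsilon>"
    and conc: "\<And>j. \<epsilon> * CD_kernel a b (ns j) (xs j) (xs j) \<le> (opoly a b (ns j) (xs j))\<^sup>2"
  shows "x0 \<notin> Xi_set a b"
proof -
  define u where "u j = tail_vec (xs j) (ns j)" for j
  have nz: "opoly a b (ns j) (xs j) \<noteq> 0" for j
    using tail_vec_concentrated(1)[OF eps conc] .
  have mass: "(\<Sum>i<L. (u j (- int i))\<^sup>2) \<le> 1 / \<epsilon>" for j L
    unfolding u_def using tail_vec_concentrated(2)[OF eps conc] .
  have "\<bar>u j (-1)\<bar> \<le> 1 + 1 / \<epsilon>" for j
    unfolding u_def using tail_vec_concentrated(3)[OF eps conc] .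
  then obtain r ar br where r: "strict_mono r"
    and ar: "\<And>k. (\<lambda>j. a (nat (int (ns (r j) + 1) + k))) \<longlonglongrightarrow> ar k"
    and br: "\<And>k. (\<lambda>j. b (nat (int (ns (r j) + 1) + k))) \<longlonglongrightarrow> br k"
    and u_m1: "convergent (\<lambda>j. u (r j) (-1))"
    by (rule coefficient_subseq[where g = "\<lambda>j. u j (-1)" and ns = ns]) blast
  have ns_r: "filterlim (\<lambda>j. ns (r j)) at_top sequentially"
    using filterlim_compose[OF ns filterlim_subseq[OF r]] by (simp add: o_def)
  have far: "\<forall>\<^sub>F j in sequentially. K \<le> int (ns (r j))" for K :: int
  proof -
    have "\<forall>\<^sub>F j in sequentially. nat K \<le> ns (r j)" using ns_r by (simp add: filterlim_at_top)
    then show ?thesis by eventually_elim linarith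
  qed
  have "c \<le> ar k" for k
    by (rule tendsto_lowerbound[OF ar]) (use far[of "- k"] in \<open>auto elim!: eventually_mono intro: a_lower\<close>)
  then have ar_nz: "ar k \<noteq> 0" for k using c_pos by (metis less_le_trans less_numeral_extra(3))
  have rec: "\<forall>\<^sub>F j in sequentially. xs (r j) * u (r j) k
      = a (nat (int (ns (r j) + 1) + k)) * u (r j) (k + 1) + b (nat (int (ns (r j) + 1) + k)) * u (r j) k
        + a (nat (int (ns (r j) + 1) + (k - 1))) * u (r j) (k - 1)" for k
    using far[of "- k"] by eventually_elim (unfold u_def, rule tail_vec_recurrence[OF nz], linarith)
  have u0: "u j 0 = 1" for j by (simp add: u_def tail_vec_0[OF nz])
  obtain W where W: "\<And>k. (\<lambda>j. u (r j) k) \<longlonglongrightarrow> W k"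
    and sol: "\<And>k. ar k * W (k + 1) + br k * W k + ar (k - 1) * W (k - 1) = x0 * W k"
    by (rule recurrence_limit[OF LIMSEQ_subseq_LIMSEQ[OF xs r, unfolded o_def] ar br ar_nz rec])
      (use u0 u_m1 convergent_const in auto)
  have W0: "W 0 = 1" using W[of 0] u0 by (simp add: LIMSEQ_const_iff)
  have W_l2: "summable (\<lambda>i::nat. (W (- int i))\<^sup>2)"
  proof (rule summableI_nonneg_bounded[where x = "1 / \<epsilon>"])
    show "(\<Sum>i<L. (W (- int i))\<^sup>2) \<le> 1 / \<epsilon>" for L
      by (rule LIMSEQ_le_const2[OF tendsto_sum[OF tendsto_power[OF W]]]) (use mass in auto)
  qed simp
  have "is_right_limit a b ar br"
    unfolding is_right_limit_def
  proof (intro exI conjI allI)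
    show "filterlim (\<lambda>j. ns (r j) + 1) at_top sequentially"
      by (rule filterlim_at_top_mono[OF ns_r]) simp
  qed (use ar br in simp_all)
  then show ?thesis by (rule not_in_Xi_set[OF _ sol]) (simp_all add: W0 W_l2)
qed

end

subsection \<open>Uniform Nevai condition\<close>

lemma uniform_limit_zero_by_sequences:
  fixes g :: "nat \<Rightarrow> real \<Rightarrow> real"
  assumes nonneg: "\<And>n x. 0 \<le> g n x"
    and no_bad_seq: "\<And>xs ns \<epsilon>. (\<And>j. xs j \<in> S) \<Longrightarrow> filterlim ns at_top sequentially \<Longrightarrow> 0 < \<epsilon>
               \<Longrightarrow> (\<And>j. \<epsilon> \<le> g (ns j) (xs j)) \<Longrightarrow> False"
  shows "uniform_limit S g (\<lambda>x. 0) sequentially"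
  unfolding uniform_limit_iff
proof (intro allI impI)
  fix \<epsilon> :: real assume eps: "0 < \<epsilon>"
  show "\<forall>\<^sub>F n in sequentially. \<forall>x\<in>S. dist (g n x) 0 < \<epsilon>"
  proof (rule ccontr)
    assume "\<not> ?thesis"
    then have "\<forall>N. \<exists>n\<ge>N. \<exists>x\<in>S. \<epsilon> \<le> g n x"
      unfolding eventually_sequentially using nonneg by (auto simp: dist_real_def not_less)
    then obtain ns xs where bad: "\<And>N. ns N \<ge> N" "\<And>N. xs N \<in> S" "\<And>N. \<epsilon> \<le> g (ns N) (xs N)"
      by metis
    have "filterlim ns at_top sequentially"
      by (rule filterlim_at_top_mono[OF filterlim_ident]) (use bad(1) in simp)
    then show False using no_bad_seq[of xs ns \<epsilon>] bad eps by blast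
  qed
qed

text \<open>The ratio p_n(x)^2 / K_n(x,x) is well behaved since K_n(x,x) \<ge> p_0(x)^2 = 1.\<close>
lemma ratio_nonneg: "0 \<le> (opoly a b n x)\<^sup>2 / CD_kernel a b n x x"
  using CD_kernel_ge(2)[of a b n x] by simp

lemma ratio_lower_bound:
  assumes "\<epsilon> \<le> (opoly a b n x)\<^sup>2 / CD_kernel a b n x x"
  shows "\<epsilon> * CD_kernel a b n x x \<le> (opoly a b n x)\<^sup>2"
  using assms CD_kernel_ge(2)[of a b n x] by (simp add: le_divide_eq)

text \<open>At an eigenvalue, p_n(x)^2 \<rightarrow> 0 and K_n(x,x) \<ge> 1, so the ratio tends to 0.\<close>
lemma ratio_tendsto_0:
  assumes "sq_summable (poly_vec a b x)"
  shows "(\<lambda>n. (opoly a b n x)\<^sup>2 / CD_kernel a b n x x) \<longlonglongrightarrow> 0"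
proof (rule Lim_null_comparison)
  have "(\<lambda>n. (poly_vec a b x n)\<^sup>2) \<longlonglongrightarrow> 0"
    using assms unfolding sq_summable_def by (rule summable_LIMSEQ_zero)
  then show "(\<lambda>n. (opoly a b n x)\<^sup>2) \<longlonglongrightarrow> 0"
    using LIMSEQ_Suc by (fastforce simp: poly_vec_def)
  show "\<forall>\<^sub>F n in sequentially. norm ((opoly a b n x)\<^sup>2 / CD_kernel a b n x x) \<le> (opoly a b n x)\<^sup>2"
  proof (intro always_eventually allI)
    fix n
    have "(opoly a b n x)\<^sup>2 / CD_kernel a b n x x \<le> (opoly a b n x)\<^sup>2"
      using CD_kernel_ge(2)[of a b n x] by (simp add: divide_le_eq mult_le_cancel_left1)
    then show "norm ((opoly a b n x)\<^sup>2 / CD_kernel a b n x x) \<le> (opoly a b n x)\<^sup>2"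
      using ratio_nonneg[of a b n x] by simp
  qed
qed

context bounded_jacobi
begin

text \<open>Part (i): on a compact subset of Xi, a bad sequence would accumulate at some x0 in Xi,
  contradicting the concentration lemma.\<close>
theorem nevai_uniform_on_compact:
  assumes K: "compact K" "K \<subseteq> Xi_set a b"
  shows "uniform_limit K (\<lambda>n x. (opoly a b n x)\<^sup>2 / CD_kernel a b n x x) (\<lambda>x. 0) sequentially"
proof (rule uniform_limit_zero_by_sequences[OF ratio_nonneg])
  fix xs ns and \<epsilon> :: real
  assume xs: "\<And>j. xs j \<in> K" and ns: "filterlim ns at_top sequentially" and eps: "0 < \<epsilon>"
    and bad: "\<And>j. \<epsilon> \<le> (opoly a b (ns j) (xs j))\<^sup>2 / CD_kernel a b (ns j) (xs j) (xs j)"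
  obtain x0 r where x0: "x0 \<in> K" "strict_mono r" "(xs \<circ> r) \<longlonglongrightarrow> x0"
    using compact_imp_seq_compact[OF K(1)] xs unfolding seq_compact_def by metis
  have "x0 \<notin> Xi_set a b"
  proof (rule concentration_excludes_Xi[OF x0(3) _ eps])
    show "filterlim (ns \<circ> r) at_top sequentially"
      using filterlim_compose[OF ns filterlim_subseq[OF x0(2)]] by (simp add: o_def)
  qed (simp add: ratio_lower_bound bad)
  then show False using x0(1) K(2) by blast
qed

text \<open>Part (ii): the spectrum is compact; a bad sequence accumulates at x0 in the spectrum but
  outside Xi, hence outside the essential spectrum, so x0 is an isolated eigenvalue; near x0
  the sequence is eventually equal to x0, where the ratio tends to 0.\<close>
theorem nevai_uniform_on_spectrum:
  assumes ess: "jacobi_ess_spectrum a b \<subseteq> Xi_set a b"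
  shows "uniform_limit (jacobi_spectrum a b) (\<lambda>n x. (opoly a b n x)\<^sup>2 / CD_kernel a b n x x)
           (\<lambda>x. 0) sequentially"
proof (rule uniform_limit_zero_by_sequences[OF ratio_nonneg])
  fix xs ns and \<epsilon> :: real
  assume xs: "\<And>j. xs j \<in> jacobi_spectrum a b" and ns: "filterlim ns at_top sequentially"
    and eps: "0 < \<epsilon>"
    and bad: "\<And>j. \<epsilon> \<le> (opoly a b (ns j) (xs j))\<^sup>2 / CD_kernel a b (ns j) (xs j) (xs j)"
  obtain x0 r where x0: "x0 \<in> jacobi_spectrum a b" "strict_mono r" "(xs \<circ> r) \<longlonglongrightarrow> x0"
    using compact_imp_seq_compact[OF spectrum_compact] xs unfolding seq_compact_def by metis
  have ns_r: "filterlim (ns \<circ> r) at_top sequentially"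
    using filterlim_compose[OF ns filterlim_subseq[OF x0(2)]] by (simp add: o_def)
  have "x0 \<notin> Xi_set a b"
    by (rule concentration_excludes_Xi[OF x0(3) ns_r eps]) (simp add: ratio_lower_bound bad)
  then have disc: "x0 \<in> jacobi_disc_spectrum a b"
    using ess x0(1) by (auto simp: jacobi_ess_spectrum_def)
  then obtain d where d: "0 < d" "ball x0 d \<inter> jacobi_spectrum a b = {x0}"
    by (auto simp: jacobi_disc_spectrum_def)
  have "\<forall>\<^sub>F j in sequentially. (xs \<circ> r) j \<in> ball x0 d"
    using x0(3) d(1) by (simp add: tendsto_iff dist_commute)
  then have at_x0: "\<forall>\<^sub>F j in sequentially. xs (r j) = x0"
    by eventually_elim (use d(2) xs in auto)
  have "(\<lambda>j. (opoly a b (ns (r j)) x0)\<^sup>2 / CD_kernel a b (ns (r j)) x0 x0) \<longlonglongrightarrow> 0"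
    using filterlim_compose[OF ratio_tendsto_0[OF disc_spectrum_poly_vec[OF disc]] ns_r]
    by (simp add: o_def)
  moreover have "\<forall>\<^sub>F j in sequentially. \<epsilon> \<le> (opoly a b (ns (r j)) x0)\<^sup>2 / CD_kernel a b (ns (r j)) x0 x0"
    using at_x0 by eventually_elim (use bad in metis)
  ultimately have "\<epsilon> \<le> 0" by (rule tendsto_lowerbound) simp
  then show False using eps by simp
qed

end

theorem theorem8p1:
  fixes a b :: "nat \<Rightarrow> real"
  assumes a_lower: "\<exists>c>0. \<forall>n\<ge>1. c \<le> a n"
    and a_upper: "\<exists>C. \<forall>n\<ge>1. a n \<le> C"
    and b_bounded: "\<exists>B. \<forall>n\<ge>1. \<bar>b n\<bar> \<le> B"
  shows "(\<forall>K. compact K \<and> K \<subseteq> Xi_set a b \<longrightarrow>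
           uniform_limit K (\<lambda>n x. (opoly a b n x)\<^sup>2 / CD_kernel a b n x x) (\<lambda>x. 0) sequentially) \<and>
         (jacobi_ess_spectrum a b \<subseteq> Xi_set a b \<longrightarrow>
           uniform_limit (jacobi_spectrum a b)
             (\<lambda>n x. (opoly a b n x)\<^sup>2 / CD_kernel a b n x x) (\<lambda>x. 0) sequentially)"
proof -
  obtain c where c: "c > 0" "\<And>n. n \<ge> 1 \<Longrightarrow> c \<le> a n" using a_lower by blast
  obtain C where C: "\<And>n. n \<ge> 1 \<Longrightarrow> a n \<le> C" using a_upper by blast
  obtain B where B: "\<And>n. n \<ge> 1 \<Longrightarrow> \<bar>b n\<bar> \<le> B" using b_bounded by blast
  interpret bounded_jacobi a b c C B
    by unfold_locales (use c C B in auto)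
  show ?thesis using nevai_uniform_on_compact nevai_uniform_on_spectrum by blast
qed

end
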